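(* Let $S$ be a finite set of odd primes and let $E=\{\overline{x}\in\overline{\Gamma}_S : x\in\mathcal{O},\ \mathrm{Nm}(x)\mid m_S\}$. Let $G$ be the abstract group with one generator $a_e$ for each $e\in E$ and relations $a_\sigma a_\tau a_\nu^{-1}=1$ for every triple $(\sigma,\tau,\nu)\in E^3$ with $\sigma\tau=\nu$ in $\overline{\Gamma}_S$. Then the map $a_e\mapsto e$ induces an isomorphism $G\cong\overline{\Gamma}_S$.
   Context: Let $\mathcal{H}$ be the quaternion algebra over $\mathbb{Q}$ with basis $1, I, J, IJ$ and relations $I^2=J^2=-1$, $IJ=-JI$, with reduced norm $\mathrm{Nm}(a+bI+cJ+dIJ)=a^2+b^2+c^2+d^2$. Let $\mathcal{O}$ be the Hurwitz order, the $\mathbb{Z}$-span of $1, I, J, \tfrac12(1+I+J+IJ)$. For a finite set $S$ of primes, let $\mathbb{Z}_S=\mathbb{Z}[1/p : p\in S]$, $m_S=\prod_{p\in S}p$, $\mathcal{O}_S=\mathcal{O}\otimes_{\mathbb{Z}}\mathbb{Z}_S$, $\Gamma_S=\mathcal{O}_S^*$ (the $S$-unit group), and $\overline{\Gamma}_S=\Gamma_S/\mathbb{Z}_S^*$ (units modulo central scalars). For $x\in\mathcal{O}$ with $\mathrm{Nm}(x)\mid m_S$, $x$ is a unit of $\mathcal{O}_S$ and $\overline{x}$ denotes its image in $\overline{\Gamma}_S$. *)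

theory Defs
  imports "HOL-Algebra.Algebra"
begin

datatype quat = Quat (re: rat) (qi: rat) (qj: rat) (qk: rat)

text \<open>Basis 1, I, J, IJ with I^2 = J^2 = -1, IJ = -JI; coordinates (a,b,c,d) = a + bI + cJ + d IJ.\<close>
definition qmul :: "quat \<Rightarrow> quat \<Rightarrow> quat" where
  "qmul x y = Quat
     (re x * re y - qi x * qi y - qj x * qj y - qk x * qk y)
     (re x * qi y + qi x * re y + qj x * qk y - qk x * qj y)
     (re x * qj y - qi x * qk y + qj x * re y + qk x * qi y)
     (re x * qk y + qi x * qj y - qj x * qi y + qk x * re y)"

definition qone :: quat where "qone = Quat 1 0 0 0"

definition qscale :: "rat \<Rightarrow> quat \<Rightarrow> quat" where
  "qscale c x = Quat (c * re x) (c * qi x) (c * qj x) (c * qk x)"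

definition qnorm :: "quat \<Rightarrow> rat" where
  "qnorm x = re x ^ 2 + qi x ^ 2 + qj x ^ 2 + qk x ^ 2"

text \<open>Hurwitz order: Z-span of 1, I, J, (1+I+J+IJ)/2.\<close>
definition hurwitz :: "quat set" where
  "hurwitz = {Quat (of_int n1 + of_int n4 / 2) (of_int n2 + of_int n4 / 2)
                   (of_int n3 + of_int n4 / 2) (of_int n4 / 2) | n1 n2 n3 n4 :: int. True}"

definition mS :: "nat set \<Rightarrow> nat" where "mS S = (\<Prod>p\<in>S. p)"

text \<open>Z_S = Z[1/p : p in S], as a subring of Q.\<close>
definition ZS :: "nat set \<Rightarrow> rat set" where
  "ZS S = {of_int a / of_nat (mS S ^ k) | a k. True}"

definition ZS_units :: "nat set \<Rightarrow> rat set" where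
  "ZS_units S = {c \<in> ZS S. \<exists>d \<in> ZS S. c * d = 1}"

text \<open>O_S = O tensor Z_S, realised as the Z_S-span of O inside the quaternion algebra.\<close>
definition OS :: "nat set \<Rightarrow> quat set" where
  "OS S = {qscale (1 / of_nat (mS S ^ k)) x | x k. x \<in> hurwitz}"

definition GammaS :: "nat set \<Rightarrow> quat set" where
  "GammaS S = {q \<in> OS S. \<exists>r \<in> OS S. qmul q r = qone \<and> qmul r q = qone}"

definition GammaS_grp :: "nat set \<Rightarrow> quat monoid" where
  "GammaS_grp S = \<lparr>carrier = GammaS S, monoid.mult = qmul, one = qone\<rparr>"

definition ZS_scalars :: "nat set \<Rightarrow> quat set" where
  "ZS_scalars S = {Quat c 0 0 0 | c. c \<in> ZS_units S}"

definition GammaS_bar :: "nat set \<Rightarrow> quat set monoid" where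
  "GammaS_bar S = GammaS_grp S Mod ZS_scalars S"

definition Egens :: "nat set \<Rightarrow> quat set set" where
  "Egens S = {ZS_scalars S #>\<^bsub>GammaS_grp S\<^esub> x | x. x \<in> hurwitz \<and>
               (\<exists>n::int. qnorm x = of_int n \<and> n dvd int (mS S))}"

text \<open>Words: letters (a, True) stand for a generator a, (a, False) for its inverse.
  pres_eq R is the congruence on words generated by free cancellation and the relators R.\<close>
inductive pres_eq :: "('a \<times> bool) list set \<Rightarrow> ('a \<times> bool) list \<Rightarrow> ('a \<times> bool) list \<Rightarrow> bool"
  for R where
  pres_refl: "pres_eq R w w"
| pres_sym: "pres_eq R v w \<Longrightarrow> pres_eq R w v"
| pres_trans: "pres_eq R u v \<Longrightarrow> pres_eq R v w \<Longrightarrow> pres_eq R u w"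
| pres_cancel: "pres_eq R (u @ [(x, b), (x, \<not> b)] @ v) (u @ v)"
| pres_rel: "r \<in> R \<Longrightarrow> pres_eq R (u @ r @ v) (u @ v)"

definition pres_class :: "'a set \<Rightarrow> ('a \<times> bool) list set \<Rightarrow> ('a \<times> bool) list \<Rightarrow> ('a \<times> bool) list set" where
  "pres_class A R w = {v \<in> lists (A \<times> UNIV). pres_eq R v w}"

definition pres_mult :: "'a set \<Rightarrow> ('a \<times> bool) list set \<Rightarrow> ('a \<times> bool) list set \<Rightarrow> ('a \<times> bool) list set \<Rightarrow> ('a \<times> bool) list set" where
  "pres_mult A R C D = pres_class A R ((SOME w. w \<in> C) @ (SOME w. w \<in> D))"

definition presented_group :: "'a set \<Rightarrow> ('a \<times> bool) list set \<Rightarrow> ('a \<times> bool) list set monoid" where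
  "presented_group A R = \<lparr>carrier = pres_class A R ` lists (A \<times> UNIV),
     monoid.mult = pres_mult A R,
     one = pres_class A R []\<rparr>"

definition E_relators :: "nat set \<Rightarrow> (quat set \<times> bool) list set" where
  "E_relators S = {[(\<sigma>, True), (\<tau>, True), (\<nu>, False)] | \<sigma> \<tau> \<nu>.
      \<sigma> \<in> Egens S \<and> \<tau> \<in> Egens S \<and> \<nu> \<in> Egens S \<and> \<sigma> \<otimes>\<^bsub>GammaS_bar S\<^esub> \<tau> = \<nu>}"

end

theory Submission
  imports Defs
begin

(* Write B = \<Gamma>_S / Z_S^* and E for the generating set.  Evaluating words in the letters
   a_e and their inverses in B respects the defining relations, so it induces a homomorphism
   \<phi> from the presented group to B with \<phi>(a_e) = e.  It is an isomorphism as soon as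
   (i) every element of B is the value of a word and (ii) every word with trivial value
   follows from the relations.  Both facts come from arithmetic in the Hurwitz order O,
   which is left Euclidean: for a prime p and x \<in> O with p | Nm x but p not dividing x,
   x = a y with Nm y = p, and y is unique up to a unit of O.
   (i) Every class in B is the class of some x \<in> O whose norm divides a power of m_S, and
   peeling off right factors of prime norm writes it as a product of elements of E.
   (ii) Using only the relations, every word is rewritten into a normal form: a single unit,
   or a list of elements of prime norm, sorted by norm, with no two neighbours of equal norm
   p whose product is divisible by p.  By uniqueness of prime-norm factors such a list never
   multiplies to a scalar, so a word with trivial value has a unit normal form, which the
   relations collapse to the empty word.
   File structure: quaternion and Hurwitz arithmetic (Euclidean division, left gcds, factors
   of prime norm); a general criterion for a presentation of a group; the S-unit group and
   its quotient B; rewriting into normal form; the word problem; generation; the theorem. *)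

lemma quat_eq_iff: "x = y \<longleftrightarrow> re x = re y \<and> qi x = qi y \<and> qj x = qj y \<and> qk x = qk y"
  by (cases x; cases y) auto

instantiation quat :: ring_1
begin
definition "zero_quat = Quat 0 0 0 0"
definition "one_quat = qone"
definition "plus_quat x y = Quat (re x + re y) (qi x + qi y) (qj x + qj y) (qk x + qk y)"
definition "minus_quat x y = Quat (re x - re y) (qi x - qi y) (qj x - qj y) (qk x - qk y)"
definition "uminus_quat x = Quat (- re x) (- qi x) (- qj x) (- qk x)"
definition "times_quat = qmul"
instance
  by standard (simp_all add: quat_eq_iff zero_quat_def one_quat_def plus_quat_def minus_quat_def
      uminus_quat_def times_quat_def qmul_def qone_def algebra_simps)
end

lemma quat_simps[simp]:
  "re 0 = 0" "qi 0 = 0" "qj 0 = 0" "qk 0 = 0"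
  "re 1 = 1" "qi 1 = 0" "qj 1 = 0" "qk 1 = 0"
  "re (x + y) = re x + re y" "qi (x + y) = qi x + qi y" "qj (x + y) = qj x + qj y" "qk (x + y) = qk x + qk y"
  "re (x - y) = re x - re y" "qi (x - y) = qi x - qi y" "qj (x - y) = qj x - qj y" "qk (x - y) = qk x - qk y"
  "re (- x) = - re x" "qi (- x) = - qi x" "qj (- x) = - qj x" "qk (- x) = - qk x"
  by (simp_all add: zero_quat_def one_quat_def plus_quat_def minus_quat_def uminus_quat_def qone_def)

lemma quat_mult_simps[simp]:
  "re (x * y) = re x * re y - qi x * qi y - qj x * qj y - qk x * qk y"
  "qi (x * y) = re x * qi y + qi x * re y + qj x * qk y - qk x * qj y"
  "qj (x * y) = re x * qj y - qi x * qk y + qj x * re y + qk x * qi y"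
  "qk (x * y) = re x * qk y + qi x * qj y - qj x * qi y + qk x * re y"
  by (simp_all add: times_quat_def qmul_def)

lemma qmul_eq[simp]: "qmul x y = x * y" by (simp add: times_quat_def)
lemma qone_eq[simp]: "qone = 1" by (simp add: one_quat_def)

definition scal :: "rat \<Rightarrow> quat" where "scal c = Quat c 0 0 0"

lemma scal_simps[simp]: "re (scal c) = c" "qi (scal c) = 0" "qj (scal c) = 0" "qk (scal c) = 0"
  by (simp_all add: scal_def)

lemma scal_mult: "scal a * scal b = scal (a * b)" by (simp add: quat_eq_iff)
lemma scal_comm: "scal c * x = x * scal c" by (simp add: quat_eq_iff)
lemma scal_1[simp]: "scal 1 = 1" by (simp add: quat_eq_iff)
lemma scal_add: "scal (a + b) = scal a + scal b" by (simp add: quat_eq_iff)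
lemma scal_inj[simp]: "scal a = scal b \<longleftrightarrow> a = b" by (simp add: quat_eq_iff)
lemma qscale_scal: "qscale c x = scal c * x" by (simp add: quat_eq_iff qscale_def)
lemma scal_left_commute: "a * (scal c * x) = scal c * (a * x)"
  by (metis scal_comm mult.assoc)

lemma scal_cancel: "p \<noteq> 0 \<Longrightarrow> scal p * x = scal p * y \<Longrightarrow> x = y"
  by (metis mult.assoc scal_1 scal_mult nonzero_divide_eq_eq mult.commute mult_1)

definition qconj :: "quat \<Rightarrow> quat" where "qconj x = Quat (re x) (- qi x) (- qj x) (- qk x)"

lemma qconj_simps[simp]: "re (qconj x) = re x" "qi (qconj x) = - qi x" "qj (qconj x) = - qj x" "qk (qconj x) = - qk x"
  by (simp_all add: qconj_def)

lemma mult_qconj: "x * qconj x = scal (qnorm x)"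
  by (simp add: quat_eq_iff qnorm_def power2_eq_square algebra_simps)
lemma qconj_mult: "qconj x * x = scal (qnorm x)"
  by (simp add: quat_eq_iff qnorm_def power2_eq_square algebra_simps)
lemma qconj_prod: "qconj (x * y) = qconj y * qconj x"
  by (simp add: quat_eq_iff algebra_simps)
lemma qconj_scal[simp]: "qconj (scal c) = scal c" by (simp add: quat_eq_iff)
lemma qconj_add: "qconj (x + y) = qconj x + qconj y" by (simp add: quat_eq_iff)

lemma qnorm_mult: "qnorm (x * y) = qnorm x * qnorm y"
proof -
  have "scal (qnorm (x * y)) = x * (y * qconj y) * qconj x"
    by (simp add: mult_qconj[symmetric] qconj_prod mult.assoc)
  also have "\<dots> = scal (qnorm x * qnorm y)"
    by (metis mult.assoc mult_qconj scal_comm scal_mult mult.commute)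
  finally show ?thesis by simp
qed

lemma qnorm_eq_0: "qnorm x = 0 \<longleftrightarrow> x = 0"
  by (simp add: qnorm_def quat_eq_iff add_nonneg_eq_0_iff)

section \<open>The Hurwitz order\<close>

text \<open>Coordinates of the Hurwitz order with respect to its basis 1, I, J, (1+I+J+IJ)/2.\<close>
definition hurw :: "int \<Rightarrow> int \<Rightarrow> int \<Rightarrow> int \<Rightarrow> quat" where
  "hurw n1 n2 n3 n4 = Quat (of_int n1 + of_int n4 / 2) (of_int n2 + of_int n4 / 2)
                   (of_int n3 + of_int n4 / 2) (of_int n4 / 2)"

lemma hurwitz_iff: "x \<in> hurwitz \<longleftrightarrow> (\<exists>n1 n2 n3 n4. x = hurw n1 n2 n3 n4)"
  by (auto simp: hurwitz_def hurw_def)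

text \<open>The structure constants of the Hurwitz basis are integral, so O is a ring.\<close>
lemma hurw_mult: "hurw n1 n2 n3 n4 * hurw m1 m2 m3 m4 = hurw
  (- n4*m4 - n4*m3 - n3*m3 + n3*m2 - n2*m4 - n2*m3 - n2*m2 + n1*m1)
  (- n4*m3 + n4*m2 + n3*m4 + n3*m2 - n2*m3 + n2*m1 + n1*m2)
  (n4*m2 + n3*m4 + n3*m2 + n3*m1 - n2*m4 - n2*m3 + n1*m3)
  (n4*m4 + n4*m3 - n4*m2 + n4*m1 - n3*m4 - 2*n3*m2 + n2*m4 + 2*n2*m3 + n1*m4)"
  unfolding hurw_def quat_eq_iff quat_mult_simps quat.sel of_int_add of_int_mult of_int_diff of_int_minus
  by (simp_all add: field_simps)

lemma hurwitz_mult: "x \<in> hurwitz \<Longrightarrow> y \<in> hurwitz \<Longrightarrow> x * y \<in> hurwitz"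
  unfolding hurwitz_iff by (elim exE) (simp only: hurw_mult, blast)

lemma hurwitz_add: "x \<in> hurwitz \<Longrightarrow> y \<in> hurwitz \<Longrightarrow> x + y \<in> hurwitz"
proof -
  have "hurw n1 n2 n3 n4 + hurw m1 m2 m3 m4 = hurw (n1+m1) (n2+m2) (n3+m3) (n4+m4)"
    for n1 n2 n3 n4 m1 m2 m3 m4
    unfolding hurw_def quat_eq_iff quat_simps quat.sel of_int_add by (simp_all add: field_simps)
  then show "x \<in> hurwitz \<Longrightarrow> y \<in> hurwitz \<Longrightarrow> x + y \<in> hurwitz" unfolding hurwitz_iff by blast
qed

lemma hurwitz_uminus: "x \<in> hurwitz \<Longrightarrow> - x \<in> hurwitz"
proof -
  have "- hurw n1 n2 n3 n4 = hurw (-n1) (-n2) (-n3) (-n4)" for n1 n2 n3 n4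
    by (simp add: hurw_def quat_eq_iff)
  then show "x \<in> hurwitz \<Longrightarrow> - x \<in> hurwitz" unfolding hurwitz_iff by metis
qed

lemma hurwitz_diff: "x \<in> hurwitz \<Longrightarrow> y \<in> hurwitz \<Longrightarrow> x - y \<in> hurwitz"
  using hurwitz_add[of x "- y"] hurwitz_uminus by simp

lemma hurwitz_scal_int: "scal (of_int n) \<in> hurwitz"
proof -
  have "scal (of_int n) = hurw n 0 0 0" by (simp add: hurw_def quat_eq_iff)
  then show ?thesis by (auto simp: hurwitz_iff)
qed

lemma hurwitz_0: "0 \<in> hurwitz" using hurwitz_scal_int[of 0] by (simp add: scal_def zero_quat_def)
lemma hurwitz_1[simp]: "1 \<in> hurwitz" using hurwitz_scal_int[of 1] by simp

lemma hurwitz_qconj: "x \<in> hurwitz \<Longrightarrow> qconj x \<in> hurwitz"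
proof -
  have "qconj (hurw n1 n2 n3 n4) = hurw (n1 + n4) (-n2) (-n3) (-n4)" for n1 n2 n3 n4
    by (simp add: hurw_def quat_eq_iff)
  then show "x \<in> hurwitz \<Longrightarrow> qconj x \<in> hurwitz" unfolding hurwitz_iff by metis
qed

lemma hurwitz_scal_mult: "x \<in> hurwitz \<Longrightarrow> scal (of_int n) * x \<in> hurwitz"
  by (simp add: hurwitz_mult hurwitz_scal_int)

lemma scal_hurwitz_int: "scal c \<in> hurwitz \<Longrightarrow> \<exists>n. c = of_int n"
proof -
  assume "scal c \<in> hurwitz"
  then obtain n1 n2 n3 n4 where e: "scal c = hurw n1 n2 n3 n4" by (auto simp: hurwitz_iff)
  then have "qk (scal c) = qk (hurw n1 n2 n3 n4)" "re (scal c) = re (hurw n1 n2 n3 n4)" by simp_all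
  then have "n4 = 0" "c = of_int n1 + of_int n4 / 2" by (simp_all add: hurw_def)
  then show ?thesis by auto
qed

text \<open>The norm of a Hurwitz quaternion is an integer; hnorm is that integer.\<close>
definition hnorm :: "quat \<Rightarrow> int" where "hnorm x = \<lfloor>qnorm x\<rfloor>"

lemma hnorm_qnorm: "x \<in> hurwitz \<Longrightarrow> of_int (hnorm x) = qnorm x"
proof -
  assume "x \<in> hurwitz"
  then obtain n1 n2 n3 n4 where x: "x = hurw n1 n2 n3 n4" by (auto simp: hurwitz_iff)
  have "qnorm x = of_int (n1^2 + n2^2 + n3^2 + n4*(n1+n2+n3) + n4^2)"
    unfolding x hurw_def qnorm_def quat.sel power2_eq_square of_int_add of_int_mult
    by (simp add: field_simps)
  then show ?thesis by (simp add: hnorm_def)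
qed

lemma hnorm_mult: "x \<in> hurwitz \<Longrightarrow> y \<in> hurwitz \<Longrightarrow> hnorm (x * y) = hnorm x * hnorm y"
  using hnorm_qnorm[of x] hnorm_qnorm[of y] hnorm_qnorm[of "x*y"] hurwitz_mult[of x y] qnorm_mult[of x y]
  by (metis of_int_eq_iff of_int_mult)

lemma hnorm_nonneg: "hnorm x \<ge> 0" by (simp add: hnorm_def qnorm_def)
lemma hnorm_qconj: "hnorm (qconj x) = hnorm x" by (simp add: hnorm_def qnorm_def)
lemma hnorm_scal_int: "hnorm (scal (of_int n)) = n^2"
  unfolding hnorm_def qnorm_def by (simp flip: of_int_power)
lemma hnorm_1[simp]: "hnorm 1 = 1" by (simp add: hnorm_def qnorm_def)
lemma mult_qconj_hnorm: "x \<in> hurwitz \<Longrightarrow> x * qconj x = scal (of_int (hnorm x))"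
  by (simp add: hnorm_qnorm mult_qconj)
lemma qconj_mult_hnorm: "x \<in> hurwitz \<Longrightarrow> qconj x * x = scal (of_int (hnorm x))"
  by (simp add: hnorm_qnorm qconj_mult)

lemma hnorm_factor_less:
  assumes "a \<in> hurwitz" "b \<in> hurwitz" "1 < hnorm b" "hnorm (a * b) \<noteq> 0"
  shows "nat (hnorm a) < nat (hnorm (a * b))"
proof -
  have "hnorm (a * b) = hnorm a * hnorm b" using hnorm_mult assms(1,2) by simp
  moreover have "0 < hnorm a" using calculation assms(4) hnorm_nonneg[of a] by (auto simp: less_le)
  ultimately show ?thesis using assms(3) by (simp add: nat_less_eq_zless)
qed

lemma unit_qconj: "u \<in> hurwitz \<Longrightarrow> hnorm u = 1 \<Longrightarrow> qconj u * u = 1 \<and> u * qconj u = 1"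
  using mult_qconj_hnorm qconj_mult_hnorm by simp

lemma hurwitz_prod: "(\<forall>x\<in>set xs. x \<in> hurwitz) \<Longrightarrow>
    prod_list xs \<in> hurwitz \<and> hnorm (prod_list xs) = prod_list (map hnorm xs)"
  by (induction xs) (auto simp: hurwitz_mult hnorm_mult)


section \<open>Euclidean division and principal left ideals in O\<close>

lemma round_rat:
  fixes x :: rat
  defines "a \<equiv> \<lfloor>x + 1/2\<rfloor>"
  shows "(x - of_int a)^2 \<le> 1/4" and "(x - of_int a)^2 = 1/4 \<Longrightarrow> x = of_int a - 1/2"
proof -
  define d where "d = x - of_int a"
  have "of_int a \<le> x + 1/2" "x + 1/2 < of_int a + 1"
    unfolding a_def using floor_correct[of "x + 1/2"] by linarith+
  then have d: "- 1/2 \<le> d" "d < 1/2" unfolding d_def by linarith+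
  have "\<bar>d\<bar>^2 \<le> (1/2)^2" by (rule power_mono) (use d in auto)
  then show "(x - of_int a)^2 \<le> 1/4" by (simp add: d_def power2_eq_square)
  assume "(x - of_int a)^2 = 1/4"
  then have "(d - 1/2) * (d + 1/2) = 0" by (simp add: d_def power2_eq_square algebra_simps)
  then show "x = of_int a - 1/2" using d by (auto simp: d_def)
qed

text \<open>Every quaternion lies at norm-distance less than 1 from the Hurwitz order: round the four
  coordinates; if that fails, all four are half-integers and the point itself is in O.\<close>
lemma hurwitz_round: "\<exists>h \<in> hurwitz. qnorm (q - h) < 1"
proof -
  define a1 where "a1 = \<lfloor>re q + 1/2\<rfloor>"
  define a2 where "a2 = \<lfloor>qi q + 1/2\<rfloor>"
  define a3 where "a3 = \<lfloor>qj q + 1/2\<rfloor>"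
  define a4 where "a4 = \<lfloor>qk q + 1/2\<rfloor>"
  define L where "L = Quat (of_int a1) (of_int a2) (of_int a3) (of_int a4)"
  have "L = hurw (a1 - a4) (a2 - a4) (a3 - a4) (2 * a4)" by (simp add: L_def hurw_def quat_eq_iff)
  then have L: "L \<in> hurwitz" by (auto simp: hurwitz_iff)
  note R = round_rat[of "re q", folded a1_def] round_rat[of "qi q", folded a2_def]
    round_rat[of "qj q", folded a3_def] round_rat[of "qk q", folded a4_def]
  have nL: "qnorm (q - L) = (re q - of_int a1)^2 + (qi q - of_int a2)^2
      + (qj q - of_int a3)^2 + (qk q - of_int a4)^2"
    by (simp add: qnorm_def L_def)
  show ?thesis
  proof (cases "qnorm (q - L) < 1")
    case True then show ?thesis using L by blast
  next
    case False
    then have "(re q - of_int a1)^2 = 1/4" "(qi q - of_int a2)^2 = 1/4"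
      "(qj q - of_int a3)^2 = 1/4" "(qk q - of_int a4)^2 = 1/4"
      using R(1,3,5,7) nL by linarith+
    then have e: "re q = of_int a1 - 1/2" "qi q = of_int a2 - 1/2" "qj q = of_int a3 - 1/2"
      "qk q = of_int a4 - 1/2"
      using R(2,4,6,8) by blast+
    have "q = hurw (a1 - a4) (a2 - a4) (a3 - a4) (2 * a4 - 1)"
      by (simp add: hurw_def quat_eq_iff e field_simps)
    then have "q \<in> hurwitz" by (auto simp: hurwitz_iff)
    then show ?thesis by (intro bexI[of _ q]) (auto simp: qnorm_def)
  qed
qed

lemma hurwitz_euclid:
  assumes a: "a \<in> hurwitz" and b: "b \<in> hurwitz" "b \<noteq> 0"
  shows "\<exists>h \<in> hurwitz. hnorm (a - h * b) < hnorm b"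
proof -
  define q where "q = a * qconj b * scal (1 / qnorm b)"
  have nb: "qnorm b \<noteq> 0" using b qnorm_eq_0 by auto
  have qb: "q * b = a"
  proof -
    have "q * b = a * (qconj b * scal (1 / qnorm b) * b)" by (simp add: q_def mult.assoc)
    also have "qconj b * scal (1 / qnorm b) * b = 1"
      by (simp add: mult.assoc[symmetric] scal_comm[of _ "qconj b", symmetric])
         (simp add: mult.assoc qconj_mult scal_mult nb)
    finally show ?thesis by simp
  qed
  obtain h where h: "h \<in> hurwitz" "qnorm (q - h) < 1" using hurwitz_round by blast
  have "a - h * b = (q - h) * b" using qb by (simp add: algebra_simps)
  then have "qnorm (a - h * b) = qnorm (q - h) * qnorm b" by (simp add: qnorm_mult)
  also have "\<dots> < qnorm b" using h nb by (simp add: mult_less_cancel_right2 less_le qnorm_def)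
  finally have "of_int (hnorm (a - h * b)) < (of_int (hnorm b) :: rat)"
    using hnorm_qnorm a b h hurwitz_diff hurwitz_mult by metis
  then show ?thesis using h by auto
qed

text \<open>A left ideal of O (closed under subtracting left multiples) that contains a nonzero
  element is generated by any of its nonzero elements of least norm.\<close>
lemma left_ideal_principal:
  assumes L: "L \<subseteq> hurwitz" "\<And>l h g. l \<in> L \<Longrightarrow> h \<in> hurwitz \<Longrightarrow> g \<in> L \<Longrightarrow> l - h * g \<in> L"
    and y: "y \<in> L" "y \<noteq> 0"
  shows "\<exists>g\<in>L. g \<noteq> 0 \<and> (\<forall>l\<in>L. \<exists>a\<in>hurwitz. l = a * g)"
proof -
  define P where "P = (\<lambda>n. \<exists>g\<in>L. g \<noteq> 0 \<and> nat (hnorm g) = n)"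
  have "P (nat (hnorm y))" using y unfolding P_def by blast
  then have "P (LEAST n. P n)" by (rule LeastI)
  then obtain g where g: "g \<in> L" "g \<noteq> 0" "nat (hnorm g) = (LEAST n. P n)" unfolding P_def by blast
  have gmin: "hnorm g \<le> hnorm l" if "l \<in> L" "l \<noteq> 0" for l
  proof -
    have "(LEAST n. P n) \<le> nat (hnorm l)" using that unfolding P_def by (blast intro: Least_le)
    then show ?thesis using g hnorm_nonneg[of g] hnorm_nonneg[of l] by linarith
  qed
  have "\<exists>a\<in>hurwitz. l = a * g" if l: "l \<in> L" for l
  proof -
    obtain h where h: "h \<in> hurwitz" "hnorm (l - h * g) < hnorm g"
      using hurwitz_euclid[of l g] L(1) l g by blast
    then have "l - h * g = 0" using gmin L(2)[OF l h(1) g(1)] by force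
    then show ?thesis using h by (intro bexI[of _ h]) auto
  qed
  then show ?thesis using g by blast
qed

lemma hurwitz_lgcd:
  assumes y1: "y1 \<in> hurwitz" and y2: "y2 \<in> hurwitz" and nz: "y1 \<noteq> 0"
  shows "\<exists>g c d a1 a2. g \<in> hurwitz \<and> c \<in> hurwitz \<and> d \<in> hurwitz \<and> a1 \<in> hurwitz \<and> a2 \<in> hurwitz \<and>
     g = c * y1 + d * y2 \<and> y1 = a1 * g \<and> y2 = a2 * g"
proof -
  define L where "L = {c * y1 + d * y2 | c d. c \<in> hurwitz \<and> d \<in> hurwitz}"
  have sub: "L \<subseteq> hurwitz" using y1 y2 by (auto simp: L_def intro!: hurwitz_add hurwitz_mult)
  have closed: "l - h * g \<in> L" if "l \<in> L" "h \<in> hurwitz" "g \<in> L" for l h g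
  proof -
    from that(1,3) obtain c d c' d' where cd: "l = c * y1 + d * y2" "g = c' * y1 + d' * y2"
      "c \<in> hurwitz" "d \<in> hurwitz" "c' \<in> hurwitz" "d' \<in> hurwitz" unfolding L_def by blast
    have "l - h * g = (c - h * c') * y1 + (d - h * d') * y2" using cd by (simp add: algebra_simps)
    moreover have "c - h * c' \<in> hurwitz" "d - h * d' \<in> hurwitz"
      using cd \<open>h \<in> hurwitz\<close> by (auto intro!: hurwitz_diff hurwitz_mult)
    ultimately show ?thesis unfolding L_def by blast
  qed
  have y1L: "y1 \<in> L" unfolding L_def by (rule CollectI, rule exI[of _ 1], rule exI[of _ 0]) (simp add: hurwitz_0)
  have y2L: "y2 \<in> L" unfolding L_def by (rule CollectI, rule exI[of _ 0], rule exI[of _ 1]) (simp add: hurwitz_0)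
  obtain g where g: "g \<in> L" "\<forall>l\<in>L. \<exists>a\<in>hurwitz. l = a * g"
    using left_ideal_principal[OF sub closed y1L nz] by blast
  from g(1) obtain c d where "g = c * y1 + d * y2" "c \<in> hurwitz" "d \<in> hurwitz" unfolding L_def by blast
  moreover obtain a1 a2 where "a1 \<in> hurwitz" "y1 = a1 * g" "a2 \<in> hurwitz" "y2 = a2 * g"
    using g(2) y1L y2L by blast
  ultimately show ?thesis using sub g(1) by blast
qed

lemma unit_combination:
  assumes "g \<in> hurwitz" "hnorm g = 1" "g = c * y1 + d * y2"
  shows "1 = qconj y1 * (qconj c * g) + qconj y2 * (qconj d * g)"
proof -
  have "1 = qconj g * g" using unit_qconj assms(1,2) by simp
  also have "qconj g = qconj y1 * qconj c + qconj y2 * qconj d"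
    using assms(3) by (simp add: qconj_add qconj_prod)
  finally show ?thesis by (simp add: algebra_simps)
qed

definition scal_dvd :: "int \<Rightarrow> quat \<Rightarrow> bool" where
  "scal_dvd p x \<longleftrightarrow> (\<exists>w\<in>hurwitz. x = scal (of_int p) * w)"

lemma scal_dvd_hnorm: "scal_dvd p x \<Longrightarrow> p^2 dvd hnorm x"
  unfolding scal_dvd_def using hnorm_mult hnorm_scal_int hurwitz_scal_int by fastforce

lemma scal_dvd_lmult: "y \<in> hurwitz \<Longrightarrow> scal_dvd p x \<Longrightarrow> scal_dvd p (y * x)"
  unfolding scal_dvd_def by (metis hurwitz_mult mult.assoc scal_comm)

lemma scal_dvd_rmult: "y \<in> hurwitz \<Longrightarrow> scal_dvd p x \<Longrightarrow> scal_dvd p (x * y)"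
  unfolding scal_dvd_def by (metis hurwitz_mult mult.assoc)

lemma scal_dvd_add: "scal_dvd p x \<Longrightarrow> scal_dvd p y \<Longrightarrow> scal_dvd p (x + y)"
  unfolding scal_dvd_def by (metis hurwitz_add distrib_left)

lemma scal_dvd_scal: "x \<in> hurwitz \<Longrightarrow> scal_dvd p (scal (of_int p) * x)"
  unfolding scal_dvd_def by blast

lemma scal_dvd_combination:
  assumes "1 = u * c + v * d" "c \<in> hurwitz" "d \<in> hurwitz"
    and "scal_dvd p (x * u)" "scal_dvd p (x * v)"
  shows "scal_dvd p x"
proof -
  have "x = x * u * c + x * v * d" by (metis assms(1) distrib_left mult.assoc mult_1_right)
  then show ?thesis using assms(2-5) by (metis scal_dvd_add scal_dvd_rmult)
qed

lemma scal_dvd_coprime: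
  assumes x: "x \<in> hurwitz" and d: "scal_dvd p (scal (of_int n) * x)" and c: "coprime n p"
  shows "scal_dvd p x"
proof -
  obtain u v where uv: "u * n + v * p = 1" using c bezout_int[of n p] by (auto simp: coprime_iff_gcd_eq_1)
  have "x = scal (of_int (u * n + v * p)) * x" using uv by simp
  also have "\<dots> = scal (of_int u) * (scal (of_int n) * x) + scal (of_int p) * (scal (of_int v) * x)"
    by (simp add: scal_add scal_mult distrib_right mult.assoc[symmetric] mult.commute)
  finally show ?thesis using d x
    by (metis scal_dvd_add scal_dvd_lmult hurwitz_scal_int scal_dvd_scal hurwitz_scal_mult)
qed

lemma scal_dvd_cancel_right:
  assumes x: "x \<in> hurwitz" and b: "b \<in> hurwitz" and d: "scal_dvd p (x * b)" and c: "coprime (hnorm b) p"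
  shows "scal_dvd p x"
proof -
  have "scal_dvd p (x * b * qconj b)" by (rule scal_dvd_rmult[OF hurwitz_qconj[OF b] d])
  moreover have "x * b * qconj b = scal (of_int (hnorm b)) * x"
    by (simp add: mult.assoc mult_qconj_hnorm[OF b] scal_comm)
  ultimately show ?thesis using scal_dvd_coprime x c by metis
qed

lemma scal_dvd_unit_left:
  assumes "u \<in> hurwitz" "hnorm u = 1" "scal_dvd p (u * x)" shows "scal_dvd p x"
proof -
  have "scal_dvd p (qconj u * (u * x))" by (rule scal_dvd_lmult[OF hurwitz_qconj[OF assms(1)] assms(3)])
  moreover have "qconj u * (u * x) = x" using unit_qconj[OF assms(1,2)] by (metis mult.assoc mult_1_left)
  ultimately show ?thesis by simp
qed

lemma not_scal_dvd_prime:
  assumes "Factorial_Ring.prime p" "hnorm x = p" shows "\<not> scal_dvd p x"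
proof
  assume "scal_dvd p x"
  then have "p * p dvd p * 1" using scal_dvd_hnorm assms by (metis power2_eq_square mult_1_right)
  then have "p dvd 1" using assms(1) by (subst (asm) dvd_mult_cancel_left) (auto simp: prime_def)
  then show False using assms(1) not_prime_unit by blast
qed

lemma divisors_prime_power:
  fixes p d :: int
  assumes "Factorial_Ring.prime p" "d \<ge> 0" "d dvd p ^ k"
  shows "\<exists>j\<le>k. d = p ^ j"
  using divides_primepow[OF assms(1,3)] assms(2) by auto

lemma unique_right_divisor:
  assumes p: "Factorial_Ring.prime p" and z: "z \<in> hurwitz" "\<not> scal_dvd p z"
    and ab: "a \<in> hurwitz" "b \<in> hurwitz" and y: "y1 \<in> hurwitz" "y2 \<in> hurwitz" "hnorm y1 = p" "hnorm y2 = p"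
    and e: "z = a * y1" "z = b * y2"
  shows "\<exists>u\<in>hurwitz. hnorm u = 1 \<and> y1 = u * y2"
proof -
  have "y1 \<noteq> 0" using y(3) p by (auto simp: hnorm_def qnorm_def)
  then obtain g c d a1 a2 where gg: "g \<in> hurwitz" "c \<in> hurwitz" "d \<in> hurwitz" "a1 \<in> hurwitz" "a2 \<in> hurwitz"
     "g = c * y1 + d * y2" "y1 = a1 * g" "y2 = a2 * g"
    using hurwitz_lgcd[OF y(1,2)] by blast
  have "p = hnorm a1 * hnorm g" using hnorm_mult[OF gg(4) gg(1)] gg(7) y(3) by simp
  then obtain j where "j \<le> 1" "hnorm g = p ^ j" using divisors_prime_power[OF p hnorm_nonneg, of g 1] by auto
  then consider "hnorm g = 1" | "hnorm g = p" by (cases j) auto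
  then show ?thesis
  proof cases
    case 1
    \<comment> \<open>then p divides z, since it divides both z (conj y1) and z (conj y2)\<close>
    have "z * qconj y1 = scal (of_int p) * a" "z * qconj y2 = scal (of_int p) * b"
      using e y mult_qconj_hnorm[OF y(1)] mult_qconj_hnorm[OF y(2)] by (metis mult.assoc scal_comm)+
    then have "scal_dvd p z"
      using scal_dvd_combination[OF unit_combination[OF gg(1) 1 gg(6)]] gg(1-3) ab
      by (metis hurwitz_mult hurwitz_qconj scal_dvd_scal)
    with z show ?thesis by simp
  next
    case 2
    have "p * hnorm a1 = p * 1" "p * hnorm a2 = p * 1"
      using hnorm_mult[OF gg(4) gg(1)] hnorm_mult[OF gg(5) gg(1)] gg(7,8) y(3,4) 2 by simp_all
    then have u1: "hnorm a1 = 1" "hnorm a2 = 1" using p by (auto simp: prime_def)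
    have "(a1 * qconj a2) * y2 = a1 * (qconj a2 * a2) * g" using gg(8) by (simp add: mult.assoc)
    then have "y1 = (a1 * qconj a2) * y2" using gg(7) unit_qconj[OF gg(5) u1(2)] by simp
    moreover have "hnorm (a1 * qconj a2) = 1" "a1 * qconj a2 \<in> hurwitz"
      using u1 gg(4,5) by (simp_all add: hnorm_mult hurwitz_qconj hnorm_qconj hurwitz_mult)
    ultimately show ?thesis by blast
  qed
qed

text \<open>Existence of prime-norm right factors: if the prime p divides Nm z but not z, then z has
  a right factor of norm p (the left gcd of p and z).\<close>
lemma right_divisor_exists:
  assumes p: "Factorial_Ring.prime p" and z: "z \<in> hurwitz" "\<not> scal_dvd p z" and dv: "p dvd hnorm z"
  shows "\<exists>a y. a \<in> hurwitz \<and> y \<in> hurwitz \<and> hnorm y = p \<and> z = a * y"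
proof -
  have "scal (of_int p) \<noteq> 0" using p by (auto simp: quat_eq_iff prime_def)
  then obtain g c d a1 a2 where gg: "g \<in> hurwitz" "c \<in> hurwitz" "d \<in> hurwitz" "a1 \<in> hurwitz" "a2 \<in> hurwitz"
     "g = c * scal (of_int p) + d * z" "scal (of_int p) = a1 * g" "z = a2 * g"
    using hurwitz_lgcd[OF hurwitz_scal_int z(1)] by blast
  have hp: "p^2 = hnorm a1 * hnorm g" using hnorm_mult[OF gg(4) gg(1)] gg(7) hnorm_scal_int[of p] by simp
  then obtain j where "j \<le> 2" "hnorm g = p ^ j" using divisors_prime_power[OF p hnorm_nonneg, of g 2] by auto
  then consider "hnorm g = 1" | "hnorm g = p" | "hnorm g = p^2"
    by (cases j; cases "j - 1") (auto simp: power2_eq_square)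
  then show ?thesis
  proof cases
    case 1
    \<comment> \<open>then p divides z, since it divides both z p and z (conj z) = Nm z\<close>
    obtain k where "hnorm z = p * k" using dv by blast
    then have "z * qconj z = scal (of_int p) * scal (of_int k)" using z(1) by (simp add: mult_qconj_hnorm scal_mult)
    moreover have "z * qconj (scal (of_int p)) = scal (of_int p) * z" by (simp add: scal_comm)
    ultimately have "scal_dvd p z"
      using scal_dvd_combination[OF unit_combination[OF gg(1) 1 gg(6)]] gg(1-3) z(1)
      by (metis hurwitz_mult hurwitz_qconj hurwitz_scal_int scal_dvd_scal)
    with z show ?thesis by simp
  next
    case 2 then show ?thesis using gg by blast
  next
    case 3
    \<comment> \<open>then g is p up to a unit, and again p divides z\<close>
    then have "p^2 * hnorm a1 = p^2 * 1" using hp by (simp add: mult.commute)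
    then have u: "hnorm a1 = 1" using p by (auto simp: prime_def)
    have "qconj a1 * scal (of_int p) = qconj a1 * a1 * g" using gg(7) by (simp add: mult.assoc)
    then have "g = qconj a1 * scal (of_int p)" using unit_qconj[OF gg(4) u] by simp
    then have "z = scal (of_int p) * (a2 * qconj a1)" using gg(8) by (metis mult.assoc scal_comm)
    then have "scal_dvd p z" using gg(4,5) by (metis hurwitz_mult hurwitz_qconj scal_dvd_scal)
    with z show ?thesis by simp
  qed
qed

text \<open>A product of elements of norm p in which no two neighbours multiply to a multiple of p is
  itself not divisible by p (by induction, using uniqueness of the last prime-norm factor).\<close>
lemma nonbacktracking_product:
  assumes p: "Factorial_Ring.prime p"
  shows "xs \<noteq> [] \<Longrightarrow> \<forall>x\<in>set xs. x \<in> hurwitz \<and> hnorm x = p \<Longrightarrow>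
    successively (\<lambda>x y. \<not> scal_dvd p (x * y)) xs \<Longrightarrow> \<not> scal_dvd p (prod_list xs)"
proof (induction xs rule: rev_induct)
  case (snoc x xs)
  show ?case
  proof (cases xs rule: rev_cases)
    case Nil then show ?thesis using snoc not_scal_dvd_prime[OF p] by simp
  next
    case (snoc ys y)
    have xs: "\<not> scal_dvd p (prod_list xs)" "\<not> scal_dvd p (y * x)"
      using snoc.IH snoc.prems snoc by (simp_all add: successively_append_iff)
    have H: "prod_list xs \<in> hurwitz" "prod_list ys \<in> hurwitz" "x \<in> hurwitz" "hnorm x = p"
      "y \<in> hurwitz" "hnorm y = p" using snoc.prems hurwitz_prod[of xs] snoc hurwitz_prod[of ys] by auto
    show ?thesis
    proof
      assume "scal_dvd p (prod_list (xs @ [x]))"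
      then obtain w where w: "w \<in> hurwitz" "prod_list xs * x = scal (of_int p) * w"
        by (auto simp: scal_dvd_def)
      have "scal (of_int p) * prod_list xs = prod_list xs * x * qconj x"
        using mult_qconj_hnorm[OF H(3)] H(4) by (metis mult.assoc scal_comm)
      also have "\<dots> = scal (of_int p) * (w * qconj x)" using w by (simp add: mult.assoc)
      finally have "prod_list xs = w * qconj x" using scal_cancel p by (metis not_prime_0 of_int_eq_0_iff)
      moreover have "prod_list xs = prod_list ys * y" using snoc by simp
      ultimately obtain u where u: "u \<in> hurwitz" "hnorm u = 1" "y = u * qconj x"
        using unique_right_divisor[OF p H(1) xs(1) H(2) w(1) H(5) hurwitz_qconj[OF H(3)] H(6)] H(4)
        by (auto simp: hnorm_qconj)
      then have "y * x = scal (of_int p) * u" using qconj_mult_hnorm[OF H(3)] H(4) by (metis mult.assoc scal_comm)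
      then show False using xs(2) u scal_dvd_scal by metis
    qed
  qed
qed simp


section \<open>Groups given by generators and relations\<close>

lemma pres_cong: "pres_eq R v w \<Longrightarrow> pres_eq R (pa @ v @ pb) (pa @ w @ pb)"
proof (induction rule: pres_eq.induct)
  case (pres_cancel u x b v)
  then show ?case using pres_eq.pres_cancel[of R "pa @ u" x b "v @ pb"] by simp
next
  case (pres_rel r u v)
  then show ?case using pres_eq.pres_rel[of r R "pa @ u" "v @ pb"] by simp
qed (blast intro: pres_eq.intros)+

lemma pres_cong_right: "pres_eq R v w \<Longrightarrow> pres_eq R (v @ b) (w @ b)"
  using pres_cong[of R v w "[]" b] by simp

lemma pres_cong_left: "pres_eq R v w \<Longrightarrow> pres_eq R (a @ v) (a @ w)"
  using pres_cong[of R v w a "[]"] by simp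

lemma pres_cancel_left: "pres_eq R ((x, b) # (x, \<not> b) # w) w"
  using pres_eq.pres_cancel[of R "[]" x b w] by simp

lemma pres_rel3:
  assumes "[(s, True), (t, True), (n, False)] \<in> R"
  shows "pres_eq R [(s, True), (t, True)] [(n, True)]"
proof -
  have "pres_eq R ([(s, True), (t, True)] @ [(n, False), (n, \<not> False)] @ []) ([(s, True), (t, True)] @ [])"
    by (rule pres_eq.pres_cancel)
  moreover have "pres_eq R ([] @ [(s, True), (t, True), (n, False)] @ [(n, True)]) ([] @ [(n, True)])"
    by (rule pres_eq.pres_rel[OF assms])
  ultimately show ?thesis by simp (meson pres_eq.pres_sym pres_eq.pres_trans)
qed

definition inv_word :: "('a \<times> bool) list \<Rightarrow> ('a \<times> bool) list" where
  "inv_word w = rev (map (\<lambda>(a, b). (a, \<not> b)) w)"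

lemma inv_word_cancel: "pres_eq R (inv_word w @ w) []"
proof (induction w rule: rev_induct)
  case (snoc x w)
  obtain a b where x: "x = (a, b)" by (cases x)
  have "inv_word (w @ [x]) @ w @ [x] = [(a, \<not> b)] @ (inv_word w @ w) @ [(a, b)]"
    by (simp add: inv_word_def x)
  moreover have "pres_eq R ([(a, \<not> b)] @ (inv_word w @ w) @ [(a, b)]) ([(a, \<not> b)] @ [] @ [(a, b)])"
    by (rule pres_cong[OF snoc.IH])
  moreover have "pres_eq R [(a, \<not> b), (a, \<not> \<not> b)] []" using pres_cancel_left[of R a "\<not> b" "[]"] .
  ultimately show ?case by (auto intro: pres_eq.pres_trans)
qed (simp add: inv_word_def pres_eq.pres_refl)

lemma inv_word_lists: "w \<in> lists (A \<times> UNIV) \<Longrightarrow> inv_word w \<in> lists (A \<times> UNIV)"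
  by (auto simp: inv_word_def)

text \<open>Evaluation of words in a group H (letters outside the carrier evaluate to the unit).\<close>
definition letter_val :: "('g, 'b) monoid_scheme \<Rightarrow> 'g \<times> bool \<Rightarrow> 'g" where
  "letter_val H l = (if snd l then (if fst l \<in> carrier H then fst l else \<one>\<^bsub>H\<^esub>)
               else inv\<^bsub>H\<^esub> (if fst l \<in> carrier H then fst l else \<one>\<^bsub>H\<^esub>))"

definition word_val :: "('g, 'b) monoid_scheme \<Rightarrow> ('g \<times> bool) list \<Rightarrow> 'g" where
  "word_val H w = foldr (\<lambda>l acc. letter_val H l \<otimes>\<^bsub>H\<^esub> acc) w \<one>\<^bsub>H\<^esub>"

definition pres_eval :: "('g, 'b) monoid_scheme \<Rightarrow> ('g \<times> bool) list set \<Rightarrow> 'g" where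
  "pres_eval H C = word_val H (SOME w. w \<in> C)"

lemma some_in_pres_class:
  "w \<in> lists (A \<times> UNIV) \<Longrightarrow> (SOME v. v \<in> pres_class A R w) \<in> pres_class A R w"
  by (rule someI[of _ w]) (simp add: pres_class_def pres_eq.pres_refl)

lemma pres_class_eq: "pres_eq R w1 w2 \<Longrightarrow> pres_class A R w1 = pres_class A R w2"
  unfolding pres_class_def by (blast intro: pres_eq.pres_trans pres_eq.pres_sym)

context group
begin

lemma word_val_simps: "word_val G [] = \<one>" "word_val G (l # w) = letter_val G l \<otimes> word_val G w"
  by (simp_all add: word_val_def)

lemma word_val_carrier: "word_val G w \<in> carrier G"
  by (induction w) (auto simp: word_val_simps letter_val_def)

lemma word_val_append: "word_val G (u @ v) = word_val G u \<otimes> word_val G v"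
  by (induction u) (auto simp: word_val_simps word_val_carrier letter_val_def m_assoc)

lemma word_val_single: "x \<in> carrier G \<Longrightarrow> word_val G [(x, True)] = x"
  by (simp add: word_val_simps letter_val_def)

lemma word_val_pres:
  assumes "\<forall>r\<in>R. word_val G r = \<one>"
  shows "pres_eq R v w \<Longrightarrow> word_val G v = word_val G w"
proof (induction rule: pres_eq.induct)
  case (pres_cancel u x b v)
  have "word_val G [(x, b), (x, \<not> b)] = \<one>" by (auto simp: word_val_simps letter_val_def)
  then show ?case
    using word_val_append[of "[(x, b), (x, \<not> b)]" v] word_val_carrier[of v] by (simp add: word_val_append)
next
  case (pres_rel r u v)
  then show ?case using assms by (simp add: word_val_append word_val_carrier)
qed auto

lemma pres_eval_class:
  assumes "\<forall>r\<in>R. word_val G r = \<one>" "w \<in> lists (A \<times> UNIV)"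
  shows "pres_eval G (pres_class A R w) = word_val G w"
proof -
  have "pres_eq R (SOME v. v \<in> pres_class A R w) w"
    using some_in_pres_class[OF assms(2)] by (simp add: pres_class_def)
  then show ?thesis unfolding pres_eval_def by (rule word_val_pres[OF assms(1)])
qed

lemma pres_eval_hom:
  assumes rels: "\<forall>r\<in>R. word_val G r = \<one>"
  shows "pres_eval G \<in> hom (presented_group A R) G"
proof (rule homI)
  fix C assume "C \<in> carrier (presented_group A R)"
  then show "pres_eval G C \<in> carrier G" by (auto simp: presented_group_def pres_eval_def word_val_carrier)
next
  fix C D assume "C \<in> carrier (presented_group A R)" "D \<in> carrier (presented_group A R)"
  then obtain w1 w2 where w: "w1 \<in> lists (A \<times> UNIV)" "C = pres_class A R w1"
    "w2 \<in> lists (A \<times> UNIV)" "D = pres_class A R w2" by (auto simp: presented_group_def)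
  define s1 s2 where "s1 = (SOME v. v \<in> C)" and "s2 = (SOME v. v \<in> D)"
  have s: "s1 \<in> lists (A \<times> UNIV)" "pres_eq R s1 w1" "s2 \<in> lists (A \<times> UNIV)" "pres_eq R s2 w2"
    using some_in_pres_class[OF w(1)] some_in_pres_class[OF w(3)]
    unfolding s1_def s2_def w(2,4) pres_class_def by blast+
  have "pres_eval G (C \<otimes>\<^bsub>presented_group A R\<^esub> D) = word_val G (s1 @ s2)"
    using pres_eval_class[OF rels] s(1,3)
    by (simp add: presented_group_def pres_mult_def s1_def s2_def)
  also have "\<dots> = word_val G w1 \<otimes> word_val G w2"
    using word_val_pres[OF rels s(2)] word_val_pres[OF rels s(4)] by (simp add: word_val_append)
  also have "\<dots> = pres_eval G C \<otimes> pres_eval G D" using pres_eval_class[OF rels] w by simp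
  finally show "pres_eval G (C \<otimes>\<^bsub>presented_group A R\<^esub> D) = pres_eval G C \<otimes> pres_eval G D" .
qed

text \<open>If every word with trivial value is congruent to the empty word, evaluation is injective
  on the presented group: if w1 and w2 have equal values, then w1 w2^-1 is trivial, hence
  w1 ~ w1 w2^-1 w2 ~ w2.\<close>
lemma pres_eval_inj:
  assumes rels: "\<forall>r\<in>R. word_val G r = \<one>"
    and trivial_words: "\<And>w. w \<in> lists (A \<times> UNIV) \<Longrightarrow> word_val G w = \<one> \<Longrightarrow> pres_eq R w []"
  shows "inj_on (pres_eval G) (carrier (presented_group A R))"
proof (rule inj_onI)
  fix C D assume "C \<in> carrier (presented_group A R)" "D \<in> carrier (presented_group A R)"
    "pres_eval G C = pres_eval G D"
  then obtain w1 w2 where w: "w1 \<in> lists (A \<times> UNIV)" "w2 \<in> lists (A \<times> UNIV)"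
    "C = pres_class A R w1" "D = pres_class A R w2" by (auto simp: presented_group_def)
  then have val: "word_val G w1 = word_val G w2"
    using \<open>pres_eval G C = pres_eval G D\<close> pres_eval_class[OF rels w(1)] pres_eval_class[OF rels w(2)]
    by simp
  have "word_val G (inv_word w2) \<otimes> word_val G w2 = \<one>"
    using word_val_pres[OF rels inv_word_cancel[of R w2]] by (simp add: word_val_append word_val_simps)
  then have "word_val G (inv_word w2) = inv (word_val G w2)"
    using inv_equality[OF _ word_val_carrier word_val_carrier] by simp
  then have "word_val G (w1 @ inv_word w2) = \<one>"
    using val by (simp add: word_val_append word_val_carrier)
  moreover have "w1 @ inv_word w2 \<in> lists (A \<times> UNIV)" using inv_word_lists w(1,2) by simp
  ultimately have "pres_eq R (w1 @ inv_word w2) []" by (rule trivial_words[rotated])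
  then have "pres_eq R ((w1 @ inv_word w2) @ w2) ([] @ w2)" by (rule pres_cong_right)
  moreover have "pres_eq R (w1 @ (inv_word w2 @ w2)) (w1 @ [])"
    by (rule pres_cong_left[OF inv_word_cancel])
  ultimately have "pres_eq R w1 w2" by simp (meson pres_eq.pres_sym pres_eq.pres_trans)
  then show "C = D" unfolding w(3,4) by (rule pres_class_eq)
qed

lemma pres_eval_surj:
  assumes rels: "\<forall>r\<in>R. word_val G r = \<one>"
    and generated: "\<forall>g\<in>carrier G. \<exists>w\<in>lists (A \<times> UNIV). word_val G w = g"
  shows "pres_eval G ` carrier (presented_group A R) = carrier G"
proof
  show "pres_eval G ` carrier (presented_group A R) \<subseteq> carrier G"
    using pres_eval_hom[OF rels] by (auto simp: hom_def)
  show "carrier G \<subseteq> pres_eval G ` carrier (presented_group A R)"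
  proof
    fix g assume "g \<in> carrier G"
    then obtain w where w: "w \<in> lists (A \<times> UNIV)" "word_val G w = g" using generated by blast
    then have "g = pres_eval G (pres_class A R w)" using pres_eval_class[OF rels w(1)] by simp
    then show "g \<in> pres_eval G ` carrier (presented_group A R)" using w(1) by (simp add: presented_group_def)
  qed
qed

theorem presentation_iso:
  assumes gens: "A \<subseteq> carrier G"
    and rels: "\<forall>r\<in>R. word_val G r = \<one>"
    and generated: "\<forall>g\<in>carrier G. \<exists>w\<in>lists (A \<times> UNIV). word_val G w = g"
    and trivial_words: "\<And>w. w \<in> lists (A \<times> UNIV) \<Longrightarrow> word_val G w = \<one> \<Longrightarrow> pres_eq R w []"
  shows "pres_eval G \<in> iso (presented_group A R) G"
    and "\<forall>a\<in>A. pres_eval G (pres_class A R [(a, True)]) = a"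
proof -
  show "pres_eval G \<in> iso (presented_group A R) G"
    using pres_eval_hom[OF rels] pres_eval_inj[OF rels trivial_words] pres_eval_surj[OF rels generated]
    by (simp add: iso_def bij_betw_def)
  show "\<forall>a\<in>A. pres_eval G (pres_class A R [(a, True)]) = a"
    using pres_eval_class[OF rels, of "[(a, True)]" A for a] word_val_single gens by auto
qed

end


lemma prod_primes_not_sq_dvd:
  fixes S :: "nat set"
  assumes "finite S" "\<forall>q\<in>S. Factorial_Ring.prime q" "p \<in> S"
  shows "\<not> (int p)^2 dvd (\<Prod>q\<in>S. int q)"
proof
  assume "(int p)^2 dvd (\<Prod>q\<in>S. int q)"
  then have "int p * int p dvd int p * (\<Prod>q\<in>S - {p}. int q)"
    using assms by (simp add: power2_eq_square prod.remove)
  then have "int p dvd (\<Prod>q\<in>S - {p}. int q)" using assms(2,3) prime_gt_0_nat by force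
  then obtain r where "r \<in> S - {p}" "int p dvd int r"
    using prime_dvd_prod_iff[of "S - {p}" "int p"] assms by auto
  then show False using assms(2,3) primes_dvd_imp_eq[of p r] by auto
qed

lemma prod_primes_two_dvd:
  fixes S :: "nat set"
  assumes "finite S" "p \<in> S" "q \<in> S" "p \<noteq> q"
  shows "int p * int q dvd (\<Prod>r\<in>S. int r)"
proof -
  have "(\<Prod>r\<in>S. int r) = int p * (int q * (\<Prod>r\<in>S - {p} - {q}. int r))"
    using assms by (simp add: prod.remove[of S p] prod.remove[of "S - {p}" q])
  then show ?thesis by (simp add: mult.assoc)
qed

lemma prime_dvd_prod_primes_power:
  fixes S :: "nat set" and r :: int
  assumes "finite S" "\<forall>q\<in>S. Factorial_Ring.prime q" "Factorial_Ring.prime r" "r dvd (\<Prod>q\<in>S. int q) ^ N"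
  shows "r \<in> int ` S"
proof -
  have "r dvd (\<Prod>q\<in>S. int q)" using prime_dvd_power[OF assms(3,4)] .
  then obtain q where q: "q \<in> S" "r dvd int q" using prime_dvd_prod_iff[of S r] assms(1,3) by auto
  then have "r = int q" using primes_dvd_imp_eq[OF assms(3), of "int q"] assms(2) by auto
  then show ?thesis using q(1) by blast
qed

locale S_arith =
  fixes S :: "nat set"
  assumes finS: "finite S" and primeS: "\<forall>p\<in>S. Factorial_Ring.prime p"
begin

abbreviation "m \<equiv> mS S"
abbreviation "M \<equiv> int (mS S)"
abbreviation "G \<equiv> GammaS_grp S"
abbreviation "Z \<equiv> ZS_scalars S"
abbreviation "B \<equiv> GammaS_bar S"

lemma m_pos: "m > 0"
  using finS primeS unfolding mS_def by (auto intro!: prod_pos simp: prime_gt_0_nat)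

lemma M_prod: "M = (\<Prod>q\<in>S. int q)"
  by (simp add: mS_def)

lemma G_simps[simp]: "carrier G = GammaS S" "monoid.mult G = (*)" "one G = 1"
  by (simp_all add: GammaS_grp_def fun_eq_iff)

lemma GammaS_iff: "q \<in> GammaS S \<longleftrightarrow> q \<in> OS S \<and> (\<exists>r\<in>OS S. q * r = 1 \<and> r * q = 1)"
  by (simp add: GammaS_def)

lemma OS_iff: "q \<in> OS S \<longleftrightarrow> (\<exists>x k. x \<in> hurwitz \<and> q = scal (1 / of_nat (m ^ k)) * x)"
  by (auto simp: OS_def qscale_scal)

lemma OS_scal: "x \<in> hurwitz \<Longrightarrow> scal (1 / of_nat (m ^ k)) * x \<in> OS S"
  unfolding OS_iff by blast

lemma OS_hurwitz: "x \<in> hurwitz \<Longrightarrow> x \<in> OS S"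
  using OS_scal[of x 0] by simp

lemma OS_mult: "q \<in> OS S \<Longrightarrow> r \<in> OS S \<Longrightarrow> q * r \<in> OS S"
proof -
  assume "q \<in> OS S" "r \<in> OS S"
  then obtain x k y j where xy: "x \<in> hurwitz" "y \<in> hurwitz" "q = scal (1 / of_nat (m ^ k)) * x"
    "r = scal (1 / of_nat (m ^ j)) * y" by (auto simp: OS_iff)
  have "q * r = scal (1 / of_nat (m ^ k)) * scal (1 / of_nat (m ^ j)) * (x * y)"
    using xy by (metis mult.assoc scal_comm)
  also have "\<dots> = scal (1 / of_nat (m ^ (k + j))) * (x * y)" by (simp add: scal_mult power_add)
  finally show ?thesis using xy hurwitz_mult by (auto simp: OS_iff)
qed

lemma GammaS_mult: "q \<in> GammaS S \<Longrightarrow> r \<in> GammaS S \<Longrightarrow> q * r \<in> GammaS S"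
proof -
  assume "q \<in> GammaS S" "r \<in> GammaS S"
  then obtain q' r' where "q \<in> OS S" "r \<in> OS S" "q' \<in> OS S" "r' \<in> OS S" "q * q' = 1" "q' * q = 1"
    "r * r' = 1" "r' * r = 1" by (auto simp: GammaS_iff)
  moreover have "q * r * (r' * q') = q * (r * r') * q'" "r' * q' * (q * r) = r' * (q' * q) * r"
    by (simp_all add: mult.assoc)
  ultimately show ?thesis unfolding GammaS_iff by (auto intro!: OS_mult)
qed

lemma GammaS_1: "1 \<in> GammaS S"
  unfolding GammaS_iff using OS_hurwitz[OF hurwitz_1] by force

lemma group_G: "group G"
proof (rule groupI)
  fix x assume "x \<in> carrier G"
  then obtain r where "x \<in> OS S" "r \<in> OS S" "x * r = 1" "r * x = 1" by (auto simp: GammaS_iff)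
  then have "r \<in> GammaS S" unfolding GammaS_iff by blast
  then show "\<exists>y\<in>carrier G. y \<otimes>\<^bsub>G\<^esub> x = \<one>\<^bsub>G\<^esub>" using \<open>r * x = 1\<close> by auto
qed (auto simp: GammaS_mult GammaS_1 mult.assoc)

lemma dvd_power_ZS_unit:
  assumes "n dvd M ^ N" shows "(of_int n :: rat) \<in> ZS_units S" "1 / (of_int n :: rat) \<in> ZS_units S"
proof -
  obtain t where t: "M ^ N = n * t" using assms by blast
  then have mN: "(of_nat (m ^ N) :: rat) = of_int n * of_int t"
    by (metis of_int_mult of_int_of_nat_eq of_nat_power)
  then have nt: "n \<noteq> 0" "t \<noteq> 0" using m_pos by auto
  have a: "(of_int n :: rat) \<in> ZS S" unfolding ZS_def by (rule CollectI, rule exI[of _ n], rule exI[of _ 0]) simp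
  have "1 / (of_int n :: rat) = of_int t / of_nat (m ^ N)" unfolding mN using nt by simp
  then have b: "1 / (of_int n :: rat) \<in> ZS S" unfolding ZS_def by blast
  show "(of_int n :: rat) \<in> ZS_units S" "1 / (of_int n :: rat) \<in> ZS_units S"
    unfolding ZS_units_def using a b nt by force+
qed

lemma ZS_units_mult: "c \<in> ZS_units S \<Longrightarrow> d \<in> ZS_units S \<Longrightarrow> c * d \<in> ZS_units S"
proof -
  have ZS_mult: "a * b \<in> ZS S" if ab: "a \<in> ZS S" "b \<in> ZS S" for a b
  proof -
    obtain x k y j where "a = of_int x / of_nat (m ^ k)" "b = of_int y / of_nat (m ^ j)"
      using ab unfolding ZS_def by blast
    then have "a * b = of_int (x * y) / of_nat (m ^ (k + j))" by (simp add: power_add)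
    then show ?thesis unfolding ZS_def by blast
  qed
  assume "c \<in> ZS_units S" "d \<in> ZS_units S"
  then obtain c' d' where "c \<in> ZS S" "d \<in> ZS S" "c' \<in> ZS S" "d' \<in> ZS S" "c * c' = 1" "d * d' = 1"
    unfolding ZS_units_def by blast
  moreover have "c * d * (c' * d') = (c * c') * (d * d')" by (simp add: algebra_simps)
  ultimately show ?thesis unfolding ZS_units_def by (auto intro!: ZS_mult)
qed

lemma scal_GammaS: "c \<in> ZS_units S \<Longrightarrow> scal c \<in> GammaS S"
proof -
  have ZS_OS: "scal a \<in> OS S" if a: "a \<in> ZS S" for a
  proof -
    obtain x k where "a = of_int x / of_nat (m ^ k)" using a unfolding ZS_def by blast
    then have "scal a = scal (1 / of_nat (m ^ k)) * scal (of_int x)" by (simp add: scal_mult)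
    then show ?thesis using OS_scal[OF hurwitz_scal_int] by simp
  qed
  assume "c \<in> ZS_units S"
  then obtain d where "c \<in> ZS S" "d \<in> ZS S" "c * d = 1" unfolding ZS_units_def by blast
  moreover have "scal c * scal d = 1" "scal d * scal c = 1"
    using \<open>c * d = 1\<close> by (simp_all add: scal_mult mult.commute)
  ultimately show ?thesis unfolding GammaS_iff using ZS_OS by blast
qed

lemma Z_iff: "z \<in> Z \<longleftrightarrow> (\<exists>c \<in> ZS_units S. z = scal c)"
  by (auto simp: ZS_scalars_def scal_def)

lemma subgroup_Z: "subgroup Z G"
proof (rule group.subgroupI[OF group_G])
  show "Z \<subseteq> carrier G" using scal_GammaS by (auto simp: Z_iff)
  show "Z \<noteq> {}" using dvd_power_ZS_unit(1)[of 1 0] Z_iff by force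
  show "inv\<^bsub>G\<^esub> a \<in> Z" if a: "a \<in> Z" for a
  proof -
    obtain c where c: "c \<in> ZS_units S" "a = scal c" using a by (auto simp: Z_iff)
    then obtain d where d: "d \<in> ZS_units S" "c * d = 1" unfolding ZS_units_def by (auto simp: mult.commute)
    have "inv\<^bsub>G\<^esub> a = scal d"
      using c d scal_GammaS by (intro group.inv_equality[OF group_G]) (auto simp: scal_mult mult.commute)
    then show ?thesis using d by (auto simp: Z_iff)
  qed
  show "\<And>a b. a \<in> Z \<Longrightarrow> b \<in> Z \<Longrightarrow> a \<otimes>\<^bsub>G\<^esub> b \<in> Z"
    by (auto simp: Z_iff scal_mult intro: ZS_units_mult)
qed

lemma normal_Z: "Z \<lhd> G"
proof (rule group.normalI[OF group_G subgroup_Z], intro ballI)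
  fix x assume "x \<in> carrier G"
  have "\<forall>h\<in>Z. h * x = x * h" by (auto simp: Z_iff scal_comm)
  then show "Z #>\<^bsub>G\<^esub> x = x <#\<^bsub>G\<^esub> Z" unfolding r_coset_def l_coset_def G_simps by auto
qed

lemma group_B: "group B"
  unfolding GammaS_bar_def by (rule normal.factorgroup_is_group[OF normal_Z])

end


context S_arith
begin

abbreviation "A \<equiv> Egens S"
abbreviation "R \<equiv> E_relators S"
abbreviation "PS \<equiv> int ` S"

definition bar :: "quat \<Rightarrow> quat set" where "bar x = Z #>\<^bsub>G\<^esub> x"

text \<open>Hurwitz quaternions whose norm divides m_S (their classes form E), whose norm is a prime
  of S, and whose norm divides a power of m_S (these are exactly the units of O_S in O).\<close>
definition is_gen :: "quat \<Rightarrow> bool" where "is_gen x \<longleftrightarrow> x \<in> hurwitz \<and> hnorm x dvd M"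
definition is_prime_elt :: "quat \<Rightarrow> bool" where "is_prime_elt x \<longleftrightarrow> x \<in> hurwitz \<and> hnorm x \<in> PS"
definition is_Sunit :: "quat \<Rightarrow> bool" where "is_Sunit x \<longleftrightarrow> x \<in> hurwitz \<and> (\<exists>N. hnorm x dvd M ^ N)"

lemma PS_prime: "p \<in> PS \<Longrightarrow> Factorial_Ring.prime p"
  using primeS by auto

lemma PS_gt1: "p \<in> PS \<Longrightarrow> p > 1"
  using PS_prime prime_gt_1_int by blast

lemma PS_dvd_M: "p \<in> PS \<Longrightarrow> p dvd M"
  unfolding M_prod using finS by auto

lemma is_prime_elt_gen: "is_prime_elt x \<Longrightarrow> is_gen x"
  unfolding is_prime_elt_def is_gen_def using PS_dvd_M by blast

lemma is_prime_elt_hnorm: "is_prime_elt x \<Longrightarrow> hnorm x > 1 \<and> x \<in> hurwitz"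
  unfolding is_prime_elt_def using PS_gt1 by fastforce

lemma unit_is_gen: "x \<in> hurwitz \<Longrightarrow> hnorm x = 1 \<Longrightarrow> is_gen x"
  unfolding is_gen_def by simp

lemma is_gen_Sunit: "is_gen x \<Longrightarrow> is_Sunit x"
  unfolding is_gen_def is_Sunit_def by (metis power_one_right)

lemma is_Sunit_mult: "is_Sunit x \<Longrightarrow> is_Sunit y \<Longrightarrow> is_Sunit (x * y)"
proof -
  assume "is_Sunit x" "is_Sunit y"
  then obtain N K where "x \<in> hurwitz" "y \<in> hurwitz" "hnorm x dvd M ^ N" "hnorm y dvd M ^ K"
    unfolding is_Sunit_def by blast
  then show ?thesis unfolding is_Sunit_def
    by (auto simp: hnorm_mult hurwitz_mult power_add intro!: exI[of _ "N + K"] mult_dvd_mono)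
qed

text \<open>Since m_S is squarefree, no element of E is divisible by a prime of S.\<close>
lemma is_gen_not_scal_dvd: assumes "is_gen x" "p \<in> PS" shows "\<not> scal_dvd p x"
proof
  assume "scal_dvd p x"
  then have "p^2 dvd M" using scal_dvd_hnorm assms(1) unfolding is_gen_def by (metis dvd_trans)
  then show False using prod_primes_not_sq_dvd[OF finS primeS] assms(2) M_prod by auto
qed

text \<open>An element of O whose norm divides a power of m_S is a unit of O_S: its inverse is
  conj(x) / Nm(x).\<close>
lemma is_Sunit_GammaS: assumes "is_Sunit x" shows "x \<in> GammaS S"
proof -
  obtain N t where x: "x \<in> hurwitz" "M ^ N = hnorm x * t" using assms unfolding is_Sunit_def by blast
  have "(of_nat (m ^ N) :: rat) = of_int (M ^ N)" by simp
  then have mN: "(of_nat (m ^ N) :: rat) = of_int (hnorm x) * of_int t" using x(2) by simp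
  then have nt: "hnorm x \<noteq> 0" "t \<noteq> 0" using m_pos by auto
  define r where "r = scal (1 / of_nat (m ^ N)) * (scal (of_int t) * qconj x)"
  have r: "r = scal (1 / of_int (hnorm x)) * qconj x"
    unfolding r_def mN using nt by (simp add: mult.assoc[symmetric] scal_mult)
  have "r \<in> OS S" unfolding r_def using x by (intro OS_scal hurwitz_scal_mult hurwitz_qconj)
  moreover have "x * r = 1" unfolding r
    using x nt by (simp add: scal_left_commute mult_qconj_hnorm scal_mult)
  moreover have "r * x = 1" unfolding r
    using x nt by (simp add: mult.assoc qconj_mult_hnorm scal_mult)
  ultimately show ?thesis unfolding GammaS_iff using OS_hurwitz[OF x(1)] by blast
qed

text \<open>Conversely every unit of O_S is such an element divided by a power of m_S: if q r = 1
  in O_S with q = x / m^k and r = y / m^j, then x y = m^(k+j), so Nm x divides a power of m.\<close>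
lemma GammaS_numerator:
  assumes "q \<in> GammaS S" obtains x k where "is_Sunit x" "q = scal (1 / of_nat (m ^ k)) * x"
proof -
  obtain r where r: "q \<in> OS S" "r \<in> OS S" "q * r = 1" using assms unfolding GammaS_iff by blast
  obtain x k where xk: "x \<in> hurwitz" "q = scal (1 / of_nat (m ^ k)) * x" using r(1) OS_iff by blast
  obtain y j where yj: "y \<in> hurwitz" "r = scal (1 / of_nat (m ^ j)) * y" using r(2) OS_iff by blast
  define N :: rat where "N = of_nat (m ^ (k + j))"
  have "q * r = scal (1 / of_nat (m ^ k)) * (x * (scal (1 / of_nat (m ^ j)) * y))"
    using xk(2) yj(2) by (simp only: mult.assoc)
  also have "\<dots> = (scal (1 / of_nat (m ^ k)) * scal (1 / of_nat (m ^ j))) * (x * y)"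
    by (simp only: scal_left_commute[of x] mult.assoc)
  also have "scal (1 / of_nat (m ^ k)) * scal (1 / of_nat (m ^ j)) = scal (1 / N)"
    by (simp add: N_def scal_mult power_add)
  finally have e: "scal (1 / N) * (x * y) = 1" using r(3) by simp
  have "x * y = (scal N * scal (1 / N)) * (x * y)" using m_pos by (simp add: N_def scal_mult)
  also have "\<dots> = scal N" using e by (simp only: mult.assoc) simp
  finally have "x * y = scal (of_int (M ^ (k + j)))" unfolding N_def by simp
  then have "hnorm (x * y) = (M ^ (k + j))^2" by (simp only: hnorm_scal_int)
  then have "hnorm x * hnorm y = M ^ ((k + j) * 2)"
    using hnorm_mult[OF xk(1) yj(1)] by (simp only: power_mult)
  then have "is_Sunit x" unfolding is_Sunit_def using xk(1) by (metis dvd_triv_left)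
  then show ?thesis using that xk(2) by blast
qed

lemma B_simps: "carrier B = (\<lambda>x. Z #>\<^bsub>G\<^esub> x) ` GammaS S" "one B = Z" "monoid.mult B = set_mult G"
  unfolding GammaS_bar_def by (simp_all add: carrier_FactGroup)

lemma bar_carrier: "x \<in> GammaS S \<Longrightarrow> bar x \<in> carrier B"
  by (simp add: B_simps bar_def)

lemma bar_mult: "x \<in> GammaS S \<Longrightarrow> y \<in> GammaS S \<Longrightarrow> bar x \<otimes>\<^bsub>B\<^esub> bar y = bar (x * y)"
  using normal.rcos_sum[OF normal_Z, of x y] by (simp add: B_simps bar_def)

lemma bar_1: "bar 1 = one B"
  using group.coset_mult_one[OF group_G, of Z] subgroup.subset[OF subgroup_Z] by (simp add: B_simps bar_def)

lemma bar_eq_one: "x \<in> GammaS S \<Longrightarrow> bar x = one B \<Longrightarrow> x \<in> Z"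
  using group.rcos_self[OF group_G _ subgroup_Z, of x] by (simp add: B_simps bar_def)

lemma bar_scal: assumes "x \<in> GammaS S" "c \<in> ZS_units S" shows "bar (scal c * x) = bar x"
proof -
  have "scal c * x \<in> Z #>\<^bsub>G\<^esub> x" unfolding r_coset_def using assms by (auto simp: Z_iff)
  then show ?thesis unfolding bar_def
    using group.repr_independence[OF group_G _ _ subgroup_Z] assms(1) by simp
qed

lemma bar_scal_int: assumes "x \<in> GammaS S" "n dvd M ^ N" shows "bar (scal (of_int n) * x) = bar x"
  using bar_scal[OF assms(1) dvd_power_ZS_unit(1)[OF assms(2)]] .

lemma Egens_iff: "e \<in> A \<longleftrightarrow> (\<exists>x. is_gen x \<and> e = bar x)"
proof
  assume "e \<in> A"
  then obtain x n where x: "e = bar x" "x \<in> hurwitz" "qnorm x = of_int n" "n dvd M"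
    unfolding Egens_def bar_def by blast
  then have "hnorm x = n" using hnorm_qnorm[OF x(2)] by simp
  then show "\<exists>x. is_gen x \<and> e = bar x" unfolding is_gen_def using x by blast
next
  assume "\<exists>x. is_gen x \<and> e = bar x"
  then obtain x where "is_gen x" "e = bar x" by blast
  then have "x \<in> hurwitz" "qnorm x = of_int (hnorm x)" "hnorm x dvd M"
    using hnorm_qnorm unfolding is_gen_def by auto
  then show "e \<in> A" unfolding Egens_def using \<open>e = bar x\<close> unfolding bar_def by blast
qed

lemma is_gen_bar: "is_gen x \<Longrightarrow> bar x \<in> A"
  using Egens_iff by blast

lemma A_carrier: "e \<in> A \<Longrightarrow> e \<in> carrier B"
  unfolding Egens_iff using bar_carrier is_Sunit_GammaS is_gen_Sunit by auto

lemma bar_qconj: assumes "is_gen x" shows "is_gen (qconj x)" "bar x \<otimes>\<^bsub>B\<^esub> bar (qconj x) = one B"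
proof -
  have x: "x \<in> hurwitz" "hnorm x dvd M ^ 1" using assms unfolding is_gen_def by auto
  show xc: "is_gen (qconj x)" using assms unfolding is_gen_def by (simp add: hnorm_qconj hurwitz_qconj)
  have "bar x \<otimes>\<^bsub>B\<^esub> bar (qconj x) = bar (scal (of_int (hnorm x)) * 1)"
    using assms xc x by (simp add: bar_mult is_Sunit_GammaS is_gen_Sunit mult_qconj_hnorm)
  also have "\<dots> = one B" using bar_scal_int[OF GammaS_1 x(2)] bar_1 by simp
  finally show "bar x \<otimes>\<^bsub>B\<^esub> bar (qconj x) = one B" .
qed

lemma relators_hold: "\<forall>r\<in>R. word_val B r = one B"
proof
  fix r assume "r \<in> R"
  then obtain s t n where r: "r = [(s, True), (t, True), (n, False)]" "s \<in> A" "t \<in> A" "n \<in> A"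
    "s \<otimes>\<^bsub>B\<^esub> t = n" unfolding E_relators_def by blast
  have c: "s \<in> carrier B" "t \<in> carrier B" "n \<in> carrier B" using r A_carrier by auto
  interpret B: group B by (rule group_B)
  have "word_val B r = (s \<otimes>\<^bsub>B\<^esub> t) \<otimes>\<^bsub>B\<^esub> inv\<^bsub>B\<^esub> n"
    using r(1) c by (simp add: B.word_val_simps letter_val_def B.m_assoc)
  then show "word_val B r = one B" using r(5) c by simp
qed

definition gword :: "quat list \<Rightarrow> (quat set \<times> bool) list" where
  "gword xs = map (\<lambda>x. (bar x, True)) xs"

lemma gword_simps[simp]:
  "gword [] = []" "gword (x # xs) = (bar x, True) # gword xs" "gword (xs @ ys) = gword xs @ gword ys"
  by (simp_all add: gword_def)

lemma word_val_gword:
  "\<forall>x\<in>set xs. is_Sunit x \<Longrightarrow> word_val B (gword xs) = bar (prod_list xs) \<and> is_Sunit (prod_list xs)"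
proof (induction xs)
  case Nil
  have "is_Sunit 1" unfolding is_Sunit_def by (auto intro!: exI[of _ 0])
  then show ?case using group.word_val_simps(1)[OF group_B] bar_1 by simp
next
  case (Cons x xs)
  then have IH: "word_val B (gword xs) = bar (prod_list xs)" "is_Sunit (prod_list xs)" and x: "is_Sunit x"
    by auto
  have "word_val B (gword (x # xs)) = bar x \<otimes>\<^bsub>B\<^esub> bar (prod_list xs)"
    using group.word_val_simps(2)[OF group_B] IH bar_carrier[OF is_Sunit_GammaS[OF x]] by (simp add: letter_val_def)
  also have "\<dots> = bar (x * prod_list xs)" using bar_mult is_Sunit_GammaS x IH(2) by simp
  finally show ?case using is_Sunit_mult[OF x IH(2)] by simp
qed

end


section \<open>Rewriting words into normal form using the relations\<close>

context S_arith
begin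

lemma relation_step:
  assumes "is_gen x" "is_gen y" "is_gen z" "bar (x * y) = bar z"
  shows "pres_eq R (gword [x, y]) (gword [z])"
proof -
  have "bar x \<otimes>\<^bsub>B\<^esub> bar y = bar z"
    using assms by (simp add: bar_mult is_Sunit_GammaS is_gen_Sunit)
  then have "[(bar x, True), (bar y, True), (bar z, False)] \<in> R"
    unfolding E_relators_def using assms is_gen_bar by blast
  then show ?thesis using pres_rel3 by simp
qed

lemma relation_step_in:
  assumes "is_gen x" "is_gen y" "is_gen z" "bar (x * y) = bar z"
  shows "pres_eq R (gword (pre @ x # y # post)) (gword (pre @ z # post))"
  using pres_cong[OF relation_step[OF assms], of "gword pre" "gword post"] by simp

lemma product_step_in:
  assumes "is_gen x" "is_gen y" "is_gen (x * y)"
  shows "pres_eq R (gword (pre @ x # y # post)) (gword (pre @ (x * y) # post))"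
  using relation_step_in[OF assms refl] .

text \<open>The letter bar 1 is trivial, by the relation (bar 1)(bar 1) = bar 1.\<close>
lemma gword_one: "pres_eq R (gword [1]) []"
proof -
  have e: "is_gen 1" by (simp add: unit_is_gen)
  have "pres_eq R (gword [1, 1] @ [(bar 1, False)]) (gword [1] @ [(bar 1, False)])"
    by (rule pres_cong_right[OF relation_step[OF e e e]]) simp
  then have "pres_eq R ((bar 1, True) # (bar 1, True) # [(bar 1, False)]) []"
    using pres_cancel_left[of R "bar 1" True "[]"] by (simp add: pres_eq.pres_trans)
  moreover have "pres_eq R ((bar 1, True) # (bar 1, True) # [(bar 1, False)]) [(bar 1, True)]"
    using pres_cong_left[OF pres_cancel_left[of R "bar 1" True "[]"], of "[(bar 1, True)]"] by simp
  ultimately show ?thesis by simp (meson pres_eq.pres_sym pres_eq.pres_trans)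
qed

definition unit_form :: "quat list \<Rightarrow> bool" where
  "unit_form zs \<longleftrightarrow> (\<exists>u. zs = [u] \<and> u \<in> hurwitz \<and> hnorm u = 1)"

definition reduced_pair :: "quat \<Rightarrow> quat \<Rightarrow> bool" where
  "reduced_pair x y \<longleftrightarrow> (hnorm x = hnorm y \<longrightarrow> \<not> scal_dvd (hnorm x) (x * y))"

definition prime_form :: "quat list \<Rightarrow> bool" where
  "prime_form zs \<longleftrightarrow> zs \<noteq> [] \<and> (\<forall>z\<in>set zs. is_prime_elt z) \<and> sorted (map hnorm zs)
     \<and> successively reduced_pair zs"

definition normal_form :: "quat list \<Rightarrow> bool" where
  "normal_form zs \<longleftrightarrow> unit_form zs \<or> prime_form zs"

definition norms_ge :: "int \<Rightarrow> quat list \<Rightarrow> bool" where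
  "norms_ge b zs \<longleftrightarrow> (\<forall>z\<in>set zs. hnorm z = 1 \<or> b \<le> hnorm z)"

lemma prime_form_tail: "prime_form (y # rest) \<Longrightarrow> rest \<noteq> [] \<Longrightarrow> prime_form rest"
  unfolding prime_form_def by (auto simp: successively_Cons)

lemma prime_form_head_le: "prime_form (y # rest) \<Longrightarrow> z \<in> set rest \<Longrightarrow> hnorm y \<le> hnorm z"
  unfolding prime_form_def by auto

lemma prime_form_unit_head:
  assumes p: "prime_form (y # rest)" and u: "u \<in> hurwitz" "hnorm u = 1"
  shows "prime_form ((u * y) # rest)"
proof -
  have yP: "is_prime_elt y" using p unfolding prime_form_def by simp
  then have uy: "is_prime_elt (u * y)" "hnorm (u * y) = hnorm y"
    using u unfolding is_prime_elt_def by (simp_all add: hurwitz_mult hnorm_mult)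
  have "reduced_pair (u * y) y2" if "rest = y2 # r" for y2 r
  proof -
    have "reduced_pair y y2" using p that unfolding prime_form_def by simp
    then show ?thesis unfolding reduced_pair_def using uy(2) scal_dvd_unit_left[OF u]
      by (metis mult.assoc)
  qed
  then have "successively reduced_pair ((u * y) # rest)"
    using p unfolding prime_form_def by (cases rest) auto
  then show ?thesis using p uy unfolding prime_form_def by simp
qed

lemma absorb_unit:
  assumes ys: "normal_form ys" and u: "u \<in> hurwitz" "hnorm u = 1"
  shows "\<exists>zs. normal_form zs \<and> pres_eq R (gword (u # ys)) (gword zs) \<and> (\<forall>b. norms_ge b ys \<longrightarrow> norms_ge b zs)"
proof (cases "unit_form ys")
  case True
  then obtain v where v: "ys = [v]" "v \<in> hurwitz" "hnorm v = 1" unfolding unit_form_def by blast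
  have uv: "u * v \<in> hurwitz" "hnorm (u * v) = 1" using u v by (simp_all add: hurwitz_mult hnorm_mult)
  have "normal_form [u * v]" unfolding normal_form_def unit_form_def using uv by blast
  moreover have "pres_eq R (gword (u # ys)) (gword [u * v])"
    using product_step_in[OF unit_is_gen[OF u] unit_is_gen[OF v(2,3)] unit_is_gen[OF uv], of "[]" "[]"] v(1)
    by simp
  moreover have "norms_ge b [u * v]" for b unfolding norms_ge_def using uv by simp
  ultimately show ?thesis by blast
next
  case False
  then have p: "prime_form ys" using ys unfolding normal_form_def by simp
  then obtain y rest where yr: "ys = y # rest" unfolding prime_form_def by (cases ys) auto
  have yP: "is_prime_elt y" using p yr unfolding prime_form_def by simp
  have uy: "is_prime_elt (u * y)" "hnorm (u * y) = hnorm y"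
    using u yP unfolding is_prime_elt_def by (simp_all add: hurwitz_mult hnorm_mult)
  have "pres_eq R (gword (u # ys)) (gword ((u * y) # rest))"
    using product_step_in[OF unit_is_gen[OF u] is_prime_elt_gen[OF yP] is_prime_elt_gen[OF uy(1)], of "[]" rest] yr
    by simp
  moreover have "normal_form ((u * y) # rest)"
    using prime_form_unit_head[OF _ u] p yr unfolding normal_form_def by simp
  moreover have "norms_ge b ys \<Longrightarrow> norms_ge b ((u * y) # rest)" for b using yr uy unfolding norms_ge_def by simp
  ultimately show ?thesis by blast
qed

text \<open>Two elements of the same prime norm p whose product is divisible by p multiply to a unit
  up to the scalar p, so the relations replace them by that unit.\<close>
lemma cancel_pair:
  assumes x: "is_prime_elt x" and y: "is_prime_elt y" and "hnorm x = hnorm y" "scal_dvd (hnorm x) (x * y)"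
  shows "\<exists>w\<in>hurwitz. hnorm w = 1 \<and> pres_eq R (gword [x, y]) (gword [w])"
proof -
  obtain w where w: "w \<in> hurwitz" "x * y = scal (of_int (hnorm x)) * w" using assms(4) unfolding scal_dvd_def by blast
  have xy: "is_gen x" "is_gen y" "x \<in> hurwitz" "y \<in> hurwitz" "hnorm x > 1"
    using x y is_prime_elt_gen is_prime_elt_hnorm by auto
  have "hnorm x ^ 2 * hnorm w = hnorm x ^ 2 * 1"
    using hnorm_mult[OF hurwitz_scal_int w(1)] hnorm_mult[OF xy(3,4)] w(2) assms(3) hnorm_scal_int
    by (simp add: power2_eq_square)
  then have hw: "hnorm w = 1" using xy(5) by simp
  have "hnorm x dvd M ^ 1" using x PS_dvd_M unfolding is_prime_elt_def by simp
  from bar_scal_int[OF is_Sunit_GammaS[OF is_gen_Sunit[OF unit_is_gen[OF w(1) hw]]] this]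
  have "bar (x * y) = bar w" using w(2) by simp
  then show ?thesis using relation_step[OF xy(1,2) unit_is_gen[OF w(1) hw]] w(1) hw by blast
qed

lemma insert_cancelling_prime:
  assumes x: "is_prime_elt x" and p: "prime_form (y # rest)"
    and cancel: "hnorm x = hnorm y" "scal_dvd (hnorm x) (x * y)"
  shows "\<exists>zs. normal_form zs \<and> pres_eq R (gword (x # y # rest)) (gword zs) \<and> (\<forall>b. norms_ge b rest \<longrightarrow> norms_ge b zs)"
proof -
  have "is_prime_elt y" using p unfolding prime_form_def by simp
  then obtain w where w: "w \<in> hurwitz" "hnorm w = 1" "pres_eq R (gword [x, y]) (gword [w])"
    using cancel_pair[OF x _ cancel] by blast
  have pres: "pres_eq R (gword (x # y # rest)) (gword (w # rest))"
    using pres_cong_right[OF w(3), of "gword rest"] by simp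
  show ?thesis
  proof (cases "rest = []")
    case True
    have "normal_form [w]" "norms_ge b [w]" for b
      unfolding normal_form_def unit_form_def norms_ge_def using w by auto
    then show ?thesis using pres True by blast
  next
    case False
    then have "normal_form rest" using prime_form_tail p unfolding normal_form_def by blast
    then show ?thesis using absorb_unit[OF _ w(1,2)] pres by (blast intro: pres_eq.pres_trans)
  qed
qed

lemma insert_small_prime:
  assumes x: "is_prime_elt x" and ys: "normal_form ys" and small: "norms_ge (hnorm x) ys"
  shows "\<exists>zs. normal_form zs \<and> pres_eq R (gword (x # ys)) (gword zs)
     \<and> (\<forall>b. b \<le> hnorm x \<longrightarrow> norms_ge b ys \<longrightarrow> norms_ge b zs)"
proof (cases "unit_form ys")
  case True
  then obtain v where v: "ys = [v]" "v \<in> hurwitz" "hnorm v = 1" unfolding unit_form_def by blast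
  have xv: "is_prime_elt (x * v)" "hnorm (x * v) = hnorm x"
    using x v unfolding is_prime_elt_def by (simp_all add: hurwitz_mult hnorm_mult)
  have "normal_form [x * v]" unfolding normal_form_def prime_form_def using xv by simp
  moreover have "pres_eq R (gword (x # ys)) (gword [x * v])"
    using product_step_in[OF is_prime_elt_gen[OF x] unit_is_gen[OF v(2,3)] is_prime_elt_gen[OF xv(1)], of "[]" "[]"]
      v(1) by simp
  moreover have "b \<le> hnorm x \<Longrightarrow> norms_ge b [x * v]" for b unfolding norms_ge_def using xv by simp
  ultimately show ?thesis by blast
next
  case False
  then have p: "prime_form ys" using ys unfolding normal_form_def by simp
  then obtain y rest where yr: "ys = y # rest" unfolding prime_form_def by (cases ys) auto
  show ?thesis
  proof (cases "hnorm x = hnorm y \<and> scal_dvd (hnorm x) (x * y)")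
    case True
    moreover have "norms_ge b ys \<Longrightarrow> norms_ge b rest" for b using yr unfolding norms_ge_def by simp
    ultimately show ?thesis using insert_cancelling_prime[OF x] p yr by blast
  next
    case False
    have "\<forall>z\<in>set ys. hnorm x \<le> hnorm z"
      using small p is_prime_elt_hnorm unfolding norms_ge_def prime_form_def by fastforce
    then have "prime_form (x # ys)"
      using p x yr False unfolding prime_form_def reduced_pair_def by simp
    moreover have "b \<le> hnorm x \<Longrightarrow> norms_ge b ys \<Longrightarrow> norms_ge b (x # ys)" for b unfolding norms_ge_def by simp
    ultimately show ?thesis unfolding normal_form_def by (blast intro: pres_eq.pres_refl)
  qed
qed

text \<open>Two elements of distinct prime norms q < p can be reordered: x y has norm p q dividing
  m_S and is not divisible by p, so it has a right factor of norm p.\<close>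
lemma swap_pair:
  assumes x: "is_prime_elt x" and y: "is_prime_elt y" and lt: "hnorm y < hnorm x"
  shows "\<exists>y' x'. is_prime_elt y' \<and> is_prime_elt x' \<and> hnorm y' = hnorm y \<and> hnorm x' = hnorm x
           \<and> pres_eq R (gword [x, y]) (gword [y', x'])"
proof -
  have H: "x \<in> hurwitz" "y \<in> hurwitz" "hnorm x \<in> PS" "hnorm y \<in> PS"
    using x y unfolding is_prime_elt_def by auto
  have hxy: "hnorm (x * y) = hnorm x * hnorm y" using hnorm_mult H by simp
  have "hnorm x * hnorm y dvd M"
    using prod_primes_two_dvd[OF finS] H(3,4) lt M_prod by auto
  then have xy: "is_gen (x * y)" unfolding is_gen_def using H hurwitz_mult hxy by simp
  obtain y' x' where yx: "y' \<in> hurwitz" "x' \<in> hurwitz" "hnorm x' = hnorm x" "x * y = y' * x'"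
    using right_divisor_exists[OF PS_prime[OF H(3)] hurwitz_mult[OF H(1,2)] is_gen_not_scal_dvd[OF xy H(3)]]
      hxy by auto
  have "hnorm y' * hnorm x = hnorm y * hnorm x" using hnorm_mult[OF yx(1,2)] yx(3,4) hxy by (simp add: mult.commute)
  then have hy': "hnorm y' = hnorm y" using PS_gt1[OF H(3)] by simp
  then have P: "is_prime_elt y'" "is_prime_elt x'" unfolding is_prime_elt_def using yx H by auto
  have "pres_eq R (gword [x, y]) (gword [x * y])" "pres_eq R (gword [y', x']) (gword [x * y])"
    using product_step_in[OF is_prime_elt_gen[OF x] is_prime_elt_gen[OF y] xy, of "[]" "[]"]
      product_step_in[OF is_prime_elt_gen[OF P(1)] is_prime_elt_gen[OF P(2)], of "[]" "[]"] xy yx(4)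
    by simp_all
  then have "pres_eq R (gword [x, y]) (gword [y', x'])" by (blast intro: pres_eq.pres_sym pres_eq.pres_trans)
  then show ?thesis using P hy' yx(3) by blast
qed

lemma prime_form_if_not_norms_ge:
  assumes "normal_form (y # rest)" "\<not> norms_ge b (y # rest)"
  shows "prime_form (y # rest)" "hnorm y < b"
proof -
  show p: "prime_form (y # rest)"
    using assms unfolding normal_form_def unit_form_def norms_ge_def by auto
  obtain z where "z \<in> set (y # rest)" "hnorm z \<noteq> 1" "hnorm z < b"
    using assms(2) unfolding norms_ge_def by force
  then show "hnorm y < b" using prime_form_head_le[OF p] by force
qed

text \<open>Inserting an arbitrary element of prime norm into a normal form (or the empty list):
  move it to the right past all entries of smaller norm by swap_pair, then insert it by
  insert_small_prime.\<close>
lemma insert_prime: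
  "is_prime_elt x \<Longrightarrow> normal_form ys \<or> ys = [] \<Longrightarrow> \<exists>zs. normal_form zs
     \<and> pres_eq R (gword (x # ys)) (gword zs) \<and> (\<forall>b. b \<le> hnorm x \<longrightarrow> norms_ge b ys \<longrightarrow> norms_ge b zs)"
proof (induction ys arbitrary: x)
  case Nil
  then show ?case unfolding normal_form_def prime_form_def norms_ge_def
    by (intro exI[of _ "[x]"]) (auto intro: pres_eq.pres_refl)
next
  case (Cons y rest)
  note x = Cons.prems(1) and ys = Cons.prems(2)[simplified]
  show ?case
  proof (cases "norms_ge (hnorm x) (y # rest)")
    case True
    then show ?thesis using insert_small_prime[OF x ys] by blast
  next
    case False
    note p = prime_form_if_not_norms_ge(1)[OF ys False] and lt = prime_form_if_not_norms_ge(2)[OF ys False]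
    have yP: "is_prime_elt y" using p unfolding prime_form_def by simp
    have yle: "norms_ge (hnorm y) rest" using prime_form_head_le[OF p] unfolding norms_ge_def by blast
    obtain y' x' where yx: "is_prime_elt y'" "is_prime_elt x'" "hnorm y' = hnorm y" "hnorm x' = hnorm x"
      "pres_eq R (gword [x, y]) (gword [y', x'])"
      using swap_pair[OF x yP lt] by blast
    obtain zs1 where zs1: "normal_form zs1" "pres_eq R (gword (x' # rest)) (gword zs1)"
      "\<forall>b. b \<le> hnorm x' \<longrightarrow> norms_ge b rest \<longrightarrow> norms_ge b zs1"
      using Cons.IH[OF yx(2)] prime_form_tail[OF p] unfolding normal_form_def by blast
    have "norms_ge (hnorm y') zs1" using zs1(3) yle yx(3,4) lt by simp
    then obtain zs where zs: "normal_form zs" "pres_eq R (gword (y' # zs1)) (gword zs)"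
      "\<forall>b. b \<le> hnorm y' \<longrightarrow> norms_ge b zs1 \<longrightarrow> norms_ge b zs"
      using insert_small_prime[OF yx(1) zs1(1)] by blast
    have "pres_eq R (gword (x # y # rest)) (gword (y' # x' # rest))"
      using pres_cong_right[OF yx(5), of "gword rest"] by simp
    moreover have "pres_eq R (gword (y' # x' # rest)) (gword (y' # zs1))"
      using pres_cong_left[OF zs1(2), of "[(bar y', True)]"] by simp
    ultimately have "pres_eq R (gword (x # y # rest)) (gword zs)"
      using zs(2) by (blast intro: pres_eq.pres_trans)
    moreover have "norms_ge b zs" if b: "b \<le> hnorm x" "norms_ge b (y # rest)" for b
    proof -
      have "b \<le> hnorm y" "norms_ge b rest"
        using b(2) is_prime_elt_hnorm[OF yP] unfolding norms_ge_def by auto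
      then show ?thesis using b(1) zs1(3) zs(3) yx(3,4) by simp
    qed
    ultimately show ?thesis using zs(1) by blast
  qed
qed

lemma peel_prime_factor:
  assumes x: "is_Sunit x" "hnorm x \<noteq> 1"
  shows "(\<exists>r w. r \<in> PS \<and> w \<in> hurwitz \<and> x = scal (of_int r) * w)
       \<or> (\<exists>a y. a \<in> hurwitz \<and> is_prime_elt y \<and> x = a * y)"
proof -
  obtain N where xH: "x \<in> hurwitz" "hnorm x dvd M ^ N" using x unfolding is_Sunit_def by blast
  then have "hnorm x \<noteq> 0" using m_pos by auto
  then obtain r where r: "r dvd hnorm x" "Factorial_Ring.prime r"
    using prime_divisor_exists[of "hnorm x"] x(2) hnorm_nonneg[of x] by auto
  have rPS: "r \<in> PS" using prime_dvd_prod_primes_power[OF finS primeS r(2)] r(1) xH(2) M_prod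
    by (metis dvd_trans)
  show ?thesis
  proof (cases "scal_dvd r x")
    case True then show ?thesis using rPS unfolding scal_dvd_def by blast
  next
    case False
    then show ?thesis using right_divisor_exists[OF r(2) xH(1) False r(1)] rPS
      unfolding is_prime_elt_def by blast
  qed
qed

text \<open>Inserting an arbitrary element of E: split off prime-norm right factors.\<close>
lemma insert_gen:
  "is_gen x \<Longrightarrow> normal_form ys \<Longrightarrow> \<exists>zs. normal_form zs \<and> pres_eq R (gword (x # ys)) (gword zs)"
proof (induction "nat (hnorm x)" arbitrary: x ys rule: less_induct)
  case less
  note x = less.prems(1) and ys = less.prems(2)
  show ?case
  proof (cases "hnorm x = 1")
    case True
    then show ?thesis using absorb_unit[OF ys] x unfolding is_gen_def by blast
  next
    case False
    then obtain a y where ay: "a \<in> hurwitz" "is_prime_elt y" "x = a * y"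
      using peel_prime_factor[OF is_gen_Sunit[OF x]] is_gen_not_scal_dvd[OF x]
      unfolding scal_dvd_def by blast
    have "hnorm x = hnorm a * hnorm y" using hnorm_mult ay is_prime_elt_hnorm by simp
    then have aE: "is_gen a" using x ay(1) unfolding is_gen_def by (metis dvd_mult_left)
    have "hnorm x \<noteq> 0" using x m_pos unfolding is_gen_def by auto
    then have lt: "nat (hnorm a) < nat (hnorm x)"
      using hnorm_factor_less ay is_prime_elt_hnorm by simp
    obtain zs1 where zs1: "normal_form zs1" "pres_eq R (gword (y # ys)) (gword zs1)"
      using insert_prime[OF ay(2)] ys by blast
    obtain zs where zs: "normal_form zs" "pres_eq R (gword (a # zs1)) (gword zs)"
      using less.hyps[OF lt aE zs1(1)] by blast
    have "pres_eq R (gword (a # y # ys)) (gword (x # ys))"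
      using product_step_in[OF aE is_prime_elt_gen[OF ay(2)], of "[]" ys] x ay(3) by simp
    moreover have "pres_eq R (gword (a # y # ys)) (gword (a # zs1))"
      using pres_cong_left[OF zs1(2), of "[(bar a, True)]"] by simp
    ultimately have "pres_eq R (gword (x # ys)) (gword (a # zs1))"
      by (blast intro: pres_eq.pres_sym pres_eq.pres_trans)
    then show ?thesis using zs by (blast intro: pres_eq.pres_trans)
  qed
qed

lemma to_normal_form:
  "\<forall>x\<in>set xs. is_gen x \<Longrightarrow> \<exists>zs. normal_form zs \<and> pres_eq R (gword xs) (gword zs)"
proof (induction xs)
  case Nil
  have "normal_form [1]" unfolding normal_form_def unit_form_def by simp
  then show ?case using gword_one pres_eq.pres_sym by fastforce
next
  case (Cons x xs)
  then obtain zs1 where zs1: "normal_form zs1" "pres_eq R (gword xs) (gword zs1)" by auto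
  obtain zs where zs: "normal_form zs" "pres_eq R (gword (x # zs1)) (gword zs)"
    using insert_gen Cons.prems zs1(1) by force
  have "pres_eq R (gword (x # xs)) (gword (x # zs1))"
    using pres_cong_left[OF zs1(2), of "[(bar x, True)]"] by simp
  then show ?case using zs by (blast intro: pres_eq.pres_trans)
qed

end


section \<open>Words with trivial value\<close>

context S_arith
begin

lemma coprime_prod_norms:
  "\<forall>z\<in>set rs. hnorm z \<in> PS \<and> hnorm z \<noteq> p \<Longrightarrow> p \<in> PS \<Longrightarrow> coprime (prod_list (map hnorm rs)) p"
proof (induction rs)
  case (Cons z rs)
  have "coprime (hnorm z) p" using Cons.prems PS_prime by (intro primes_coprime) auto
  then show ?case using Cons by simp
qed simp

text \<open>Split a prime form at the end of its leading block of entries of the smallest norm p: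
  the block is non-backtracking, so its product is not divisible by p, and all later norms
  are primes different from p.\<close>
lemma prime_form_leading_block:
  assumes pf: "prime_form zs" and p: "p = hnorm (hd zs)"
  defines "ws \<equiv> takeWhile (\<lambda>z. hnorm z = p) zs" and "rs \<equiv> dropWhile (\<lambda>z. hnorm z = p) zs"
  shows "\<not> scal_dvd p (prod_list ws)" and "coprime (hnorm (prod_list rs)) p"
proof -
  have allP: "\<forall>z\<in>set zs. is_prime_elt z" and srt: "sorted (map hnorm zs)" and "zs \<noteq> []"
    using pf unfolding prime_form_def by auto
  then have pPS: "p \<in> PS" using p unfolding is_prime_elt_def by (cases zs) auto
  have wr: "zs = ws @ rs" unfolding ws_def rs_def by simp
  have "ws \<noteq> []" unfolding ws_def using \<open>zs \<noteq> []\<close> p by (cases zs) auto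
  moreover have wsP: "\<forall>z\<in>set ws. z \<in> hurwitz \<and> hnorm z = p"
    using allP wr unfolding ws_def is_prime_elt_def by (auto dest: set_takeWhileD)
  moreover have "successively (\<lambda>x y. \<not> scal_dvd p (x * y)) ws"
    using pf wr wsP unfolding prime_form_def reduced_pair_def
    by (auto simp: successively_append_iff elim: successively_mono)
  ultimately show "\<not> scal_dvd p (prod_list ws)" using nonbacktracking_product[OF PS_prime[OF pPS]] by blast
  have "\<forall>z\<in>set rs. hnorm z \<noteq> p"
  proof
    fix z assume z: "z \<in> set rs"
    then obtain h t where ht: "rs = h # t" by (cases rs) auto
    have "hnorm h \<noteq> p" using hd_dropWhile[of "\<lambda>z. hnorm z = p" zs] ht unfolding rs_def by simp
    moreover have "\<forall>z\<in>set zs. p \<le> hnorm z" using srt p \<open>zs \<noteq> []\<close> by (cases zs) auto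
    then have "p \<le> hnorm h" using wr ht by simp
    moreover have "hnorm h \<le> hnorm z" using srt wr ht z by (auto simp: sorted_append)
    ultimately show "hnorm z \<noteq> p" by simp
  qed
  moreover have "\<forall>z\<in>set rs. z \<in> hurwitz \<and> hnorm z \<in> PS" using allP wr unfolding is_prime_elt_def by auto
  ultimately show "coprime (hnorm (prod_list rs)) p"
    using coprime_prod_norms[of rs p] pPS hurwitz_prod[of rs] by simp
qed

text \<open>Otherwise the
  scalar is an integer divisible by the smallest norm p, and cancelling the later block
  (of norm coprime to p) shows that p divides the product of the leading block.\<close>
lemma prime_form_not_scalar:
  assumes "prime_form zs" shows "prod_list zs \<noteq> scal c"
proof
  assume c: "prod_list zs = scal c"
  define p where "p = hnorm (hd zs)"
  define ws rs where "ws = takeWhile (\<lambda>z. hnorm z = p) zs" and "rs = dropWhile (\<lambda>z. hnorm z = p) zs"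
  have H: "\<forall>z\<in>set zs. z \<in> hurwitz" "zs \<noteq> []" "p \<in> PS"
    using assms unfolding prime_form_def is_prime_elt_def p_def by (auto simp: hd_in_set)
  obtain n where n: "c = of_int n" using c hurwitz_prod[OF H(1)] scal_hurwitz_int by force
  have "p dvd hnorm (prod_list zs)"
    using hurwitz_prod[OF H(1)] H(2) unfolding p_def by (cases zs) auto
  then have "p dvd n * n" using c n hnorm_scal_int by (simp add: power2_eq_square)
  then obtain k where "n = p * k" using PS_prime[OF H(3)] by (auto simp: prime_dvd_mult_iff)
  then have "prod_list ws * prod_list rs = scal (of_int p) * scal (of_int k)"
    using c n unfolding ws_def rs_def by (simp add: scal_mult flip: prod_list.append)
  then have "scal_dvd p (prod_list ws * prod_list rs)" unfolding scal_dvd_def using hurwitz_scal_int by blast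
  moreover have "prod_list ws \<in> hurwitz" "prod_list rs \<in> hurwitz"
    using hurwitz_prod[of ws] hurwitz_prod[of rs] H(1) unfolding ws_def rs_def
    by (auto dest: set_takeWhileD set_dropWhileD)
  ultimately show False
    using scal_dvd_cancel_right prime_form_leading_block[OF assms p_def] unfolding ws_def rs_def by blast
qed

lemma inverse_letter: assumes "is_gen x" shows "pres_eq R [(bar x, False)] [(bar (qconj x), True)]"
proof -
  have c: "is_gen (qconj x)" using bar_qconj(1)[OF assms] .
  have "bar (x * qconj x) = bar 1"
    using bar_qconj(2)[OF assms] bar_mult[OF is_Sunit_GammaS[OF is_gen_Sunit[OF assms]] is_Sunit_GammaS[OF is_gen_Sunit[OF c]]]
      bar_1 by simp
  then have "pres_eq R (gword [x, qconj x]) (gword [1])"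
    using relation_step[OF assms c unit_is_gen[OF hurwitz_1 hnorm_1]] by simp
  then have "pres_eq R (gword [x, qconj x]) []" using gword_one by (rule pres_eq.pres_trans)
  from pres_cong_left[OF this, of "[(bar x, False)]"]
  have "pres_eq R ([(bar x, False)] @ gword [x, qconj x]) [(bar x, False)]" by simp
  moreover have "pres_eq R ([(bar x, False)] @ gword [x, qconj x]) [(bar (qconj x), True)]"
    using pres_cancel_left[of R "bar x" False] by simp
  ultimately show ?thesis by (blast intro: pres_eq.pres_sym pres_eq.pres_trans)
qed

lemma word_as_gword: "w \<in> lists (A \<times> UNIV) \<Longrightarrow> \<exists>xs. (\<forall>x\<in>set xs. is_gen x) \<and> pres_eq R w (gword xs)"
proof (induction w)
  case Nil show ?case by (intro exI[of _ "[]"]) (simp add: pres_eq.pres_refl)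
next
  case (Cons l w)
  then obtain xs where xs: "\<forall>x\<in>set xs. is_gen x" "pres_eq R w (gword xs)" by auto
  obtain e b where l: "l = (e, b)" by (cases l)
  then obtain x where x: "is_gen x" "e = bar x" using Cons.prems Egens_iff by auto
  have w1: "pres_eq R (l # w) (l # gword xs)" using pres_cong_left[OF xs(2), of "[l]"] by simp
  show ?case
  proof (cases b)
    case True
    then show ?thesis using w1 xs x l by (intro exI[of _ "x # xs"]) simp
  next
    case False
    have "pres_eq R (l # gword xs) (gword (qconj x # xs))"
      using pres_cong_right[OF inverse_letter[OF x(1)], of "gword xs"] l x False by simp
    then show ?thesis using w1 xs bar_qconj(1)[OF x(1)]
      by (intro exI[of _ "qconj x # xs"]) (auto intro: pres_eq.pres_trans)
  qed
qed

text \<open>Solution of the word problem: a word with trivial value in B follows from the relations.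
  Its normal form multiplies to a scalar, so it is a single unit u of O, and bar u = bar 1.\<close>
lemma trivial_word_relations:
  assumes "w \<in> lists (A \<times> UNIV)" "word_val B w = one B" shows "pres_eq R w []"
proof -
  obtain xs where xs: "\<forall>x\<in>set xs. is_gen x" "pres_eq R w (gword xs)" using word_as_gword[OF assms(1)] by blast
  obtain zs where zs: "normal_form zs" "pres_eq R (gword xs) (gword zs)" using to_normal_form[OF xs(1)] by blast
  have wz: "pres_eq R w (gword zs)" using xs(2) zs(2) pres_eq.pres_trans by blast
  have "\<forall>x\<in>set zs. is_Sunit x"
    using zs(1) unfolding normal_form_def unit_form_def prime_form_def is_prime_elt_def is_Sunit_def
    by (auto intro!: exI[of _ 1] PS_dvd_M)
  moreover have "word_val B (gword zs) = one B"
    using group.word_val_pres[OF group_B relators_hold wz] assms(2) by simp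
  ultimately have "bar (prod_list zs) = one B" "is_Sunit (prod_list zs)" using word_val_gword by auto
  then obtain c where "prod_list zs = scal c" using bar_eq_one is_Sunit_GammaS Z_iff by blast
  then obtain u where u: "zs = [u]" "u \<in> hurwitz" "hnorm u = 1"
    using zs(1) prime_form_not_scalar unfolding normal_form_def unit_form_def by blast
  have "bar u = bar 1" using \<open>bar (prod_list zs) = one B\<close> u bar_1 by simp
  then have "gword zs = gword [1]" using u by simp
  then show ?thesis using wz gword_one pres_eq.pres_trans by metis
qed

section \<open>E generates the quotient\<close>

text \<open>The class of every element of O with norm dividing a power of m_S is a product of
  classes in E (induction on the norm, peeling off prime-norm right factors).\<close>
lemma Sunit_class_word: "is_Sunit x \<Longrightarrow> \<exists>xs. (\<forall>y\<in>set xs. is_gen y) \<and> word_val B (gword xs) = bar x"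
proof (induction "nat (hnorm x)" arbitrary: x rule: less_induct)
  case less
  note x = less.prems
  have hx: "x \<in> hurwitz" "hnorm x \<noteq> 0" using x m_pos unfolding is_Sunit_def by auto
  consider "hnorm x = 1" | r w where "r \<in> PS" "w \<in> hurwitz" "x = scal (of_int r) * w"
    | a y where "a \<in> hurwitz" "is_prime_elt y" "x = a * y"
    using peel_prime_factor[OF x] by blast
  then show ?case
  proof cases
    case 1
    then show ?thesis using word_val_gword[of "[x]"] x unit_is_gen[OF hx(1)] by (intro exI[of _ "[x]"]) simp
  next
    case (2 r w)
    have "hnorm x = hnorm w * r^2" using 2 hnorm_mult[OF hurwitz_scal_int] hnorm_scal_int by simp
    then have "is_Sunit w" using x 2(2) unfolding is_Sunit_def by (metis dvd_mult_left)
    moreover have "bar x = bar w" using bar_scal_int[OF is_Sunit_GammaS[OF \<open>is_Sunit w\<close>]] 2 PS_dvd_M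
      by (metis power_one_right)
    moreover have "1 < r^2" using PS_gt1[OF 2(1)] by (simp add: power2_eq_square less_1_mult)
    then have "nat (hnorm w) < nat (hnorm x)"
      using hnorm_factor_less[OF 2(2) hurwitz_scal_int] hnorm_scal_int hx(2) 2(3) scal_comm by metis
    ultimately show ?thesis using less.hyps by metis
  next
    case (3 a y)
    have "hnorm x = hnorm a * hnorm y" using 3 hnorm_mult is_prime_elt_hnorm by simp
    then have aU: "is_Sunit a" using x 3(1) unfolding is_Sunit_def by (metis dvd_mult_left)
    have yE: "is_gen y" using is_prime_elt_gen[OF 3(2)] .
    have "nat (hnorm a) < nat (hnorm x)"
      using hnorm_factor_less 3 hx(2) is_prime_elt_hnorm by simp
    then obtain xs where xs: "\<forall>y\<in>set xs. is_gen y" "word_val B (gword xs) = bar a"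
      using less.hyps aU by blast
    have "word_val B (gword (xs @ [y])) = bar a \<otimes>\<^bsub>B\<^esub> bar y"
      using xs(2) word_val_gword[of "[y]"] is_gen_Sunit[OF yE] by (simp add: group.word_val_append[OF group_B])
    also have "\<dots> = bar x" using bar_mult is_Sunit_GammaS aU is_gen_Sunit yE 3(3) by simp
    finally show ?thesis using xs yE by (intro exI[of _ "xs @ [y]"]) auto
  qed
qed

text \<open>Every element of B is the value of a word in the generators: write it as bar q with q a
  unit of O_S, replace q by its numerator in O, and factor that.\<close>
lemma generated: "\<forall>g\<in>carrier B. \<exists>w\<in>lists (A \<times> UNIV). word_val B w = g"
proof
  fix g assume "g \<in> carrier B"
  then obtain q where q: "q \<in> GammaS S" "g = bar q" by (auto simp: B_simps bar_def)
  obtain x k where x: "is_Sunit x" "q = scal (1 / of_nat (m ^ k)) * x" using q(1) by (rule GammaS_numerator)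
  have "1 / of_nat (m ^ k) \<in> ZS_units S" using dvd_power_ZS_unit(2)[of "M ^ k" k] by simp
  then have "g = bar x" using q x bar_scal is_Sunit_GammaS by simp
  then obtain xs where xs: "\<forall>y\<in>set xs. is_gen y" "word_val B (gword xs) = g"
    using Sunit_class_word[OF x(1)] by blast
  moreover have "gword xs \<in> lists (A \<times> UNIV)" using xs(1) is_gen_bar unfolding gword_def by auto
  ultimately show "\<exists>w\<in>lists (A \<times> UNIV). word_val B w = g" by blast
qed

end

theorem mainTheorem7:
  fixes S :: "nat set"
  assumes "finite S" and "\<forall>p\<in>S. Factorial_Ring.prime p \<and> odd p"
  shows "\<exists>\<phi>. \<phi> \<in> iso (presented_group (Egens S) (E_relators S)) (GammaS_bar S) \<and>
           (\<forall>e\<in>Egens S. \<phi> (pres_class (Egens S) (E_relators S) [(e, True)]) = e)"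
proof -
  interpret S_arith S using assms by unfold_locales auto
  interpret B: group B by (rule group_B)
  have "A \<subseteq> carrier B" using A_carrier by blast
  with B.presentation_iso[OF _ relators_hold generated trivial_word_relations]
  show ?thesis by blast
qed

end
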